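(* Consider the following evolution model. Let $X$ and $Z$ be positive integer-valued random variables; let $(X_n)_{n\ge 0}$ be i.i.d.\ copies of $X$, $(Z_n)_{n\ge 0}$ i.i.d.\ copies of $Z$, all mutually independent. Fix $p\in(0,1)$ and set $q=1-p$. The state at time $n$ is a finite set $T_n$ of vertices, each carrying a fitness in $[0,1]$, with $T_0=\emptyset$. At each time $n$, independently of everything else: with probability $p$, $Z_n$ new vertices are added, each with a fitness uniformly distributed on $[0,1]$ independently of each other and of everything else (so $|T_{n+1}|=|T_n|+Z_n$); otherwise (with probability $q$) the $X_n$ vertices with the smallest fitnesses are removed, and if $T_n$ has fewer than $X_n$ vertices all are removed (so $|T_{n+1}|=\max\{|T_n|-X_n,0\}$). Assume there is an integer constant $M>0$ such that $X\le M$ almost surely, and $\mathbb{E}(Z^2)<\infty$. Let $\mu_X=\mathbb{E}X$, $\mu_Z=\mathbb{E}Z$, $p_c=\frac{\mu_X}{\mu_X+\mu_Z}$, suppose $p\in(p_c,1)$, and let $$f=\frac{q}{p}\,\frac{\mu_X}{\mu_Z}\in(0,1).$$ Let $R_n$ be the set of vertices alive at time $n$ whose fitnesses lie in $[f,1]$, and $R'_n$ the set of all vertices born during times $0$ through $n$ whose fitness lies in $[f,1]$. Then for every $\varepsilon>0$ there is a constant $C>0$ such that, almost surely, there exists $n_0\in\mathbb{N}$ (possibly random) with $$0\le |R'_n|-|R_n|\le C\,n^{\frac12+\varepsilon}\quad\text{for all } n\ge n_0.$$ Moreover, $T_n$ (viewed as the set of fitnesses of its vertices) approaches a random sample from the uniform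 distribution $U[f,1]$.
   Context: Definition: Suppose $A_1\subseteq A_2\subseteq\cdots$ is an infinite sequence of sets, each a finite collection of points in $\mathbb{R}$. We say $A_n$ approaches a random sample from distribution $F$ if, with probability $1$, there exists another sequence of sets $B_1\subseteq B_2\subseteq\cdots$ such that (i) each $B_n$ is a finite collection of i.i.d.\ random variables with common distribution $F$; (ii) $|B_n|\to\infty$ as $n\to\infty$; (iii) $|A_n\,\Delta\, B_n|=o(|B_n|)$ as $n\to\infty$, where $A\Delta B=(A\setminus B)\cup(B\setminus A)$. *)

theory Defs
  imports "HOL-Probability.Probability" "HOL-Library.Nat_Bijection"
begin

text \<open>Vertices are labelled by pairs (birth time n, index k) with k < Z n.
  The fitness of vertex (n,k) is U n k.\<close>

text \<open>Remove the m vertices of smallest fitness (ties, which occur with probability 0,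
  are broken deterministically by the vertex label via a stable sort); if fewer than m vertices exist, all are removed.\<close>
definition kill_smallest :: "(nat \<times> nat \<Rightarrow> real) \<Rightarrow> nat \<Rightarrow> (nat \<times> nat) set \<Rightarrow> (nat \<times> nat) set" where
  "kill_smallest fit m S =
     prod_decode ` set (drop m (sort_key (\<lambda>c. fit (prod_decode c)) (sorted_list_of_set (prod_encode ` S))))"

text \<open>The state T_n, as a function of the coin flips b (True = birth step), the removal
  sizes x, the birth sizes z and the fitnesses u.\<close>
primrec tree :: "(nat \<Rightarrow> bool) \<Rightarrow> (nat \<Rightarrow> nat) \<Rightarrow> (nat \<Rightarrow> nat) \<Rightarrow> (nat \<Rightarrow> nat \<Rightarrow> real) \<Rightarrow> nat \<Rightarrow> (nat \<times> nat) set" where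
  "tree b x z u 0 = {}"
| "tree b x z u (Suc n) =
     (if b n then tree b x z u n \<union> {(n, k) | k. k < z n}
      else kill_smallest (\<lambda>v. u (fst v) (snd v)) (x n) (tree b x z u n))"

text \<open>Index set for all the driving random variables of the model, used to state
  their mutual independence (all coerced to real values).\<close>
datatype src = SX nat | SZ nat | SB nat | SU nat nat

fun model_vars :: "(nat \<Rightarrow> 'a \<Rightarrow> nat) \<Rightarrow> (nat \<Rightarrow> 'a \<Rightarrow> nat) \<Rightarrow> (nat \<Rightarrow> 'a \<Rightarrow> bool) \<Rightarrow> (nat \<Rightarrow> nat \<Rightarrow> 'a \<Rightarrow> real)
    \<Rightarrow> src \<Rightarrow> 'a \<Rightarrow> real" where
  "model_vars X Z B U (SX n) = (\<lambda>\<omega>. real (X n \<omega>))"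
| "model_vars X Z B U (SZ n) = (\<lambda>\<omega>. real (Z n \<omega>))"
| "model_vars X Z B U (SB n) = (\<lambda>\<omega>. of_bool (B n \<omega>))"
| "model_vars X Z B U (SU n k) = U n k"

text \<open>"A_n approaches a random sample from distribution F" (A_n random finite sets of reals):
  with probability 1 there are nested finite subcollections B_n of an i.i.d. sequence Y
  with law F such that |B_n| \<rightarrow> \<infinity> and |A_n \<Delta> B_n| = o(|B_n|).\<close>
definition approaches_random_sample :: "'a measure \<Rightarrow> (nat \<Rightarrow> 'a \<Rightarrow> real set) \<Rightarrow> real measure \<Rightarrow> bool" where
  "approaches_random_sample M A F \<longleftrightarrow>
     (\<exists>Y :: nat \<Rightarrow> 'a \<Rightarrow> real.
        prob_space.indep_vars M (\<lambda>_. borel) Y UNIV \<and>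
        (\<forall>i. distr M lborel (Y i) = F) \<and>
        (AE \<omega> in M. \<exists>I :: nat \<Rightarrow> nat set.
            (\<forall>n. finite (I n)) \<and> incseq I \<and>
            filterlim (\<lambda>n. card ((\<lambda>i. Y i \<omega>) ` I n)) at_top sequentially \<and>
            (\<forall>e>0. eventually (\<lambda>n.
                real (card ((A n \<omega> - (\<lambda>i. Y i \<omega>) ` I n) \<union> ((\<lambda>i. Y i \<omega>) ` I n - A n \<omega>)))
                  \<le> e * real (card ((\<lambda>i. Y i \<omega>) ` I n))) sequentially)))"

end

theory Submission
  imports Defs "HOL-Real_Asymp.Real_Asymp"
begin

text \<open>Call a vertex low if its fitness is below f and high otherwise, and let S_n be the number of
  low vertices born before time n minus the total number of removals requested before n. Since a
  removal step kills high vertices only when no low vertex is left, the number of high vertices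
  killed so far is at most the running maximum of -S, and the number of low vertices alive is at
  most S_n plus that maximum. The value of f makes S_n a sum of independent centred increments with
  bounded second moments, so a dyadic maximal inequality and Borel-Cantelli give
  S_n = O(n^(1/2+\<epsilon>)) almost surely; the same holds for the centred birth sizes, and the first
  claim follows. For the second, the alive fitnesses differ from the fitnesses of all high vertices
  ever born in O(n^(3/4)) elements, while the latter grow linearly in number. Mapping [0,f) affinely
  onto [f,1) turns all fitnesses into an i.i.d. U[f,1] sequence that leaves the high ones fixed.\<close>

section \<open>Removing the vertices of smallest fitness\<close>

lemma kill_smallest_eq_drop:
  assumes "finite S"
  obtains L where "distinct L" "set L = prod_encode ` S"
    "sorted (map (\<lambda>c. fit (prod_decode c)) L)"
    "kill_smallest fit m S = prod_decode ` set (drop m L)"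
proof -
  let ?L = "sort_key (\<lambda>c. fit (prod_decode c)) (sorted_list_of_set (prod_encode ` S))"
  show ?thesis
  proof (rule that)
    show "distinct ?L" "set ?L = prod_encode ` S" using assms by auto
    show "sorted (map (\<lambda>c. fit (prod_decode c)) ?L)" by (rule sorted_sort_key)
    show "kill_smallest fit m S = prod_decode ` set (drop m ?L)" by (simp only: kill_smallest_def)
  qed
qed

lemma kill_smallest_subset:
  assumes "finite S"
  shows "kill_smallest fit m S \<subseteq> S"
proof -
  obtain L where L: "distinct L" "set L = prod_encode ` S" "sorted (map (\<lambda>c. fit (prod_decode c)) L)"
      "kill_smallest fit m S = prod_decode ` set (drop m L)"
    by (rule kill_smallest_eq_drop[OF assms])
  then show ?thesis using set_drop_subset[of m L] by auto
qed

lemma card_kill_smallest: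
  assumes "finite S"
  shows "card (kill_smallest fit m S) = card S - m"
proof -
  obtain L where L: "distinct L" "set L = prod_encode ` S" "sorted (map (\<lambda>c. fit (prod_decode c)) L)"
      "kill_smallest fit m S = prod_decode ` set (drop m L)"
    by (rule kill_smallest_eq_drop[OF assms])
  have "length L = card S"
    using distinct_card[OF L(1)] L(2) card_image[OF inj_on_subset[OF inj_prod_encode subset_UNIV]]
    by simp
  moreover have "card (kill_smallest fit m S) = length L - m"
    unfolding L(4) using L(1)
    by (simp add: card_image[OF inj_on_subset[OF inj_prod_decode subset_UNIV]] distinct_card)
  ultimately show ?thesis by simp
qed

lemma kill_smallest_removes_smallest:
  assumes "finite S" and a: "a \<in> S - kill_smallest fit m S" and b: "b \<in> kill_smallest fit m S"
  shows "fit a \<le> fit b"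
proof -
  obtain L where L: "distinct L" "set L = prod_encode ` S" "sorted (map (\<lambda>c. fit (prod_decode c)) L)"
      "kill_smallest fit m S = prod_decode ` set (drop m L)"
    by (rule kill_smallest_eq_drop[OF assms(1)])
  have "prod_encode a \<notin> set (drop m L)"
  proof
    assume "prod_encode a \<in> set (drop m L)"
    then have "a \<in> kill_smallest fit m S" unfolding L(4) by force
    then show False using a by simp
  qed
  moreover have "prod_encode a \<in> set L" using a L(2) by auto
  ultimately have a_taken: "prod_encode a \<in> set (take m L)"
    by (metis Un_iff append_take_drop_id set_append)
  obtain c where c: "c \<in> set (drop m L)" "b = prod_decode c" using b unfolding L(4) by auto
  have "sorted (map (\<lambda>c. fit (prod_decode c)) (take m L) @ map (\<lambda>c. fit (prod_decode c)) (drop m L))"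
    using L(3) by (metis append_take_drop_id map_append)
  then have "fit (prod_decode (prod_encode a)) \<le> fit (prod_decode c)"
    using a_taken c(1) by (auto simp: sorted_append)
  then show ?thesis using c by simp
qed

section \<open>Deterministic bookkeeping along a run\<close>

lemma eventually_const_le_powr:
  assumes "a > 0"
  shows "eventually (\<lambda>n::nat. K \<le> real n powr a) sequentially"
proof -
  have "filterlim (\<lambda>n::nat. real n powr a) at_top sequentially" using assms by real_asymp
  then show ?thesis by (simp add: filterlim_at_top)
qed

lemma eventually_sublinear_le_linear:
  assumes "c > 0"
  shows "eventually (\<lambda>n::nat. K + L * (2 * real n) powr (3/4) \<le> c * real n) sequentially"
proof -
  have "(\<lambda>n::nat. (K + L * (2 * real n) powr (3/4)) / real n) \<longlonglongrightarrow> 0" by real_asymp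
  from order_tendstoD(2)[OF this assms] eventually_gt_at_top[of 0]
  show ?thesis by eventually_elim (simp add: divide_less_eq)
qed

lemma mono_powr_double: "0 \<le> a \<Longrightarrow> mono (\<lambda>n::nat. (2 * real n) powr a)"
  by (auto simp: mono_def intro!: powr_mono2)

declare tree.simps(2) [simp del]

locale tree_run =
  fixes b :: "nat \<Rightarrow> bool" and x z :: "nat \<Rightarrow> nat" and u :: "nat \<Rightarrow> nat \<Rightarrow> real"
    and f :: real
begin

abbreviation T :: "nat \<Rightarrow> (nat \<times> nat) set" where "T \<equiv> tree b x z u"

definition fit :: "nat \<times> nat \<Rightarrow> real" where "fit v = u (fst v) (snd v)"

definition born :: "nat \<Rightarrow> (nat \<times> nat) set" where "born n = {(m, k). m < n \<and> b m \<and> k < z m}"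

definition batch :: "nat \<Rightarrow> (nat \<times> nat) set" where "batch n = Pair n ` {..<z n}"

definition born_high :: "nat \<Rightarrow> (nat \<times> nat) set" where
  "born_high n = {v \<in> born n. f \<le> fit v \<and> fit v \<le> 1}"

definition alive_high :: "nat \<Rightarrow> (nat \<times> nat) set" where
  "alive_high n = {v \<in> T n. f \<le> fit v \<and> fit v \<le> 1}"

definition removal_demand :: "nat \<Rightarrow> real" where
  "removal_demand n = (\<Sum>m<n. if b m then 0 else real (x m))"

definition low_surplus :: "nat \<Rightarrow> real" where
  "low_surplus n = real (card {v \<in> born n. fit v < f}) - removal_demand n"

fun deficit :: "nat \<Rightarrow> real" where
  "deficit 0 = 0"
| "deficit (Suc n) = max (deficit n) (- low_surplus (Suc n))"

lemma fit_conv: "(\<lambda>v. u (fst v) (snd v)) = fit"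
  by (auto simp: fit_def)

lemma finite_batch [simp]: "finite (batch n)"
  by (simp add: batch_def)

lemma card_batch: "card (batch n) = z n"
  by (simp add: batch_def card_image inj_on_def)

lemma born_Suc: "born (Suc n) = (if b n then born n \<union> batch n else born n)"
  by (auto simp: born_def batch_def less_Suc_eq)

lemma finite_born [simp]: "finite (born n)"
  by (induction n) (simp_all add: born_Suc, simp add: born_def)

lemma batch_disjoint_born: "batch n \<inter> born n = {}"
  by (auto simp: batch_def born_def)

lemma tree_Suc_birth: "b n \<Longrightarrow> T (Suc n) = T n \<union> batch n"
  by (auto simp: tree.simps(2) batch_def)

lemma tree_Suc_removal: "\<not> b n \<Longrightarrow> T (Suc n) = kill_smallest fit (x n) (T n)"
  by (simp add: tree.simps(2) fit_conv)

lemma tree_subset_born: "T n \<subseteq> born n"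
proof (induction n)
  case (Suc n)
  show ?case
  proof (cases "b n")
    case True
    have "T (Suc n) = T n \<union> batch n" "born (Suc n) = born n \<union> batch n"
      using True by (simp_all add: tree_Suc_birth born_Suc)
    then show ?thesis using Suc by blast
  next
    case False
    have "T (Suc n) \<subseteq> T n" "born (Suc n) = born n"
      using False kill_smallest_subset[OF finite_subset[OF Suc finite_born]]
      by (simp_all add: tree_Suc_removal born_Suc)
    then show ?thesis using Suc by (metis order_trans)
  qed
qed simp

lemma finite_tree [simp]: "finite (T n)"
  using finite_subset[OF tree_subset_born finite_born] .

lemma deficit_ge_neg_low_surplus: "- low_surplus n \<le> deficit n"
  by (cases n) (auto simp: low_surplus_def removal_demand_def born_def)

lemma deficit_le_Suc: "deficit n \<le> deficit (Suc n)"
  by simp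

definition bookkeeping :: "nat \<Rightarrow> bool" where
  "bookkeeping n \<longleftrightarrow>
     real (card (born n - T n)) \<le> removal_demand n \<and>
     real (card ({v \<in> born n. f \<le> fit v} - T n)) \<le> deficit n \<and>
     real (card {v \<in> T n. fit v < f}) \<le> low_surplus n + deficit n"

lemma bookkeeping_birth:
  assumes "bookkeeping n" and "b n"
  shows "bookkeeping (Suc n)"
proof -
  have T': "T (Suc n) = T n \<union> batch n" using \<open>b n\<close> by (rule tree_Suc_birth)
  have B': "born (Suc n) = born n \<union> batch n" using \<open>b n\<close> by (simp add: born_Suc)
  have "T n \<inter> batch n = {}" using batch_disjoint_born[of n] tree_subset_born[of n] by blast
  then have "card {v \<in> T (Suc n). fit v < f} = card {v \<in> T n. fit v < f} + card {v \<in> batch n. fit v < f}"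
    unfolding T' by (subst card_Un_disjoint[symmetric]) (auto intro!: arg_cong[where f = card])
  moreover have "card {v \<in> born (Suc n). fit v < f}
      = card {v \<in> born n. fit v < f} + card {v \<in> batch n. fit v < f}"
    using batch_disjoint_born[of n] unfolding B'
    by (subst card_Un_disjoint[symmetric]) (auto intro!: arg_cong[where f = card])
  moreover have "removal_demand (Suc n) = removal_demand n"
    using \<open>b n\<close> by (simp add: removal_demand_def)
  moreover have "born (Suc n) - T (Suc n) = born n - T n"
    "{v \<in> born (Suc n). f \<le> fit v} - T (Suc n) = {v \<in> born n. f \<le> fit v} - T n"
    using T' B' batch_disjoint_born[of n] tree_subset_born[of n] by blast+
  ultimately show ?thesis
    using assms(1) deficit_le_Suc[of n] by (auto simp: bookkeeping_def low_surplus_def)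
qed

text \<open>A removal step kills low vertices as long as there are any, so high vertices die only
  while the removal demand exceeds the number of low births; this is what the deficit records.\<close>

lemma bookkeeping_removal:
  assumes IH: "bookkeeping n" and "\<not> b n"
  shows "bookkeeping (Suc n)"
proof -
  let ?T = "T n" and ?K = "T (Suc n)" and ?high = "{v \<in> born n. f \<le> fit v}"
  have K: "?K = kill_smallest fit (x n) ?T" using \<open>\<not> b n\<close> by (rule tree_Suc_removal)
  have K_sub: "?K \<subseteq> ?T" unfolding K by (simp add: kill_smallest_subset)
  have cK: "card ?K = card ?T - x n" unfolding K by (simp add: card_kill_smallest)
  have killed_first: "fit a \<le> fit c" if "a \<in> ?T - ?K" "c \<in> ?K" for a c
    using that unfolding K by (rule kill_smallest_removes_smallest[OF finite_tree])
  have cTK: "card (?T - ?K) = card ?T - card ?K" using K_sub by (simp add: card_Diff_subset)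
  have B': "born (Suc n) = born n" using \<open>\<not> b n\<close> by (simp add: born_Suc)
  have demand': "removal_demand (Suc n) = removal_demand n + x n"
    using \<open>\<not> b n\<close> by (simp add: removal_demand_def)
  have surplus': "low_surplus (Suc n) = low_surplus n - x n"
    using B' demand' by (simp add: low_surplus_def)
  have dead: "real (card (born n - ?K)) \<le> removal_demand (Suc n)"
  proof -
    have "born n - ?K = (born n - ?T) \<union> (?T - ?K)" using K_sub tree_subset_born[of n] by blast
    then have "card (born n - ?K) = card (born n - ?T) + card (?T - ?K)"
      by (subst card_Un_disjoint[symmetric]) auto
    moreover have "card (?T - ?K) \<le> x n" using cTK cK by simp
    moreover have "real (card (born n - ?T)) \<le> removal_demand n" using IH by (simp add: bookkeeping_def)
    ultimately show ?thesis using demand' by linarith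
  qed
  have high_dead: "real (card (?high - ?K)) \<le> deficit (Suc n)"
  proof (cases "\<exists>h \<in> ?T - ?K. f \<le> fit h")
    case False
    then have "?high - ?K = ?high - ?T" using K_sub by force
    then show ?thesis using IH deficit_le_Suc[of n] by (simp add: bookkeeping_def del: deficit.simps)
  next
    case True
    then obtain h where h: "h \<in> ?T - ?K" "f \<le> fit h" by blast
    have "{v \<in> ?K. fit v < f} = {}" using killed_first[OF h(1)] h(2) by force
    then have "born n - ?K = (?high - ?K) \<union> {v \<in> born n. fit v < f}" by auto
    then have "card (born n - ?K) = card (?high - ?K) + card {v \<in> born n. fit v < f}"
      by (subst card_Un_disjoint[symmetric]) auto
    then have "real (card (?high - ?K)) \<le> - low_surplus (Suc n)"
      using dead B' by (simp add: low_surplus_def)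
    then show ?thesis using deficit_ge_neg_low_surplus[of "Suc n"] by simp
  qed
  have low_alive: "real (card {v \<in> ?K. fit v < f}) \<le> low_surplus (Suc n) + deficit (Suc n)"
  proof (cases "\<exists>l \<in> ?K. fit l < f")
    case True
    then obtain l where l: "l \<in> ?K" "fit l < f" by blast
    have "\<forall>r \<in> ?T - ?K. fit r < f" using killed_first[OF _ l(1)] l(2) by force
    then have "{v \<in> ?T. fit v < f} = {v \<in> ?K. fit v < f} \<union> (?T - ?K)" using K_sub by blast
    moreover have "card (?T - ?K) = x n" using l(1) cTK cK card_gt_0_iff[of ?K] by auto
    moreover have "{v \<in> ?K. fit v < f} \<inter> (?T - ?K) = {}" by blast
    ultimately have "card {v \<in> ?T. fit v < f} = card {v \<in> ?K. fit v < f} + x n"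
      by (simp add: card_Un_disjoint)
    then show ?thesis using IH surplus' deficit_le_Suc[of n] by (simp add: bookkeeping_def)
  next
    case False
    then have "real (card {v \<in> ?K. fit v < f}) = 0" by auto
    then show ?thesis using deficit_ge_neg_low_surplus[of "Suc n"] by linarith
  qed
  show ?thesis using dead high_dead low_alive B' by (simp add: bookkeeping_def)
qed

lemma bookkeeping: "bookkeeping n"
proof (induction n)
  case 0
  then show ?case by (simp add: bookkeeping_def born_def removal_demand_def low_surplus_def)
next
  case (Suc n)
  then show ?case by (cases "b n") (simp_all add: bookkeeping_birth bookkeeping_removal)
qed

lemma card_high_dead_le_deficit: "real (card ({v \<in> born n. f \<le> fit v} - T n)) \<le> deficit n"
  using bookkeeping[of n] by (simp add: bookkeeping_def)

lemma card_low_alive_le: "real (card {v \<in> T n. fit v < f}) \<le> low_surplus n + deficit n"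
  using bookkeeping[of n] by (simp add: bookkeeping_def)

lemma alive_high_subset: "alive_high n \<subseteq> born_high (Suc n)"
  using tree_subset_born[of n] by (auto simp: alive_high_def born_high_def born_def)

lemma card_born_high_minus_alive_high:
  "real (card (born_high (Suc n))) - real (card (alive_high n)) \<le> deficit n + real (z n)"
proof -
  have "born_high (Suc n) - alive_high n \<subseteq> ({v \<in> born n. f \<le> fit v} - T n) \<union> batch n"
    using born_Suc[of n] by (auto simp: born_high_def alive_high_def split: if_splits)
  then have "card (born_high (Suc n) - alive_high n) \<le> card (({v \<in> born n. f \<le> fit v} - T n) \<union> batch n)"
    by (rule card_mono[rotated]) simp
  also have "\<dots> \<le> card ({v \<in> born n. f \<le> fit v} - T n) + z n"
    using card_Un_le[of "{v \<in> born n. f \<le> fit v} - T n" "batch n"] by (simp add: card_batch)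
  finally have "card (born_high (Suc n) - alive_high n) \<le> card ({v \<in> born n. f \<le> fit v} - T n) + z n" .
  moreover have "card (born_high (Suc n) - alive_high n)
      = card (born_high (Suc n)) - card (alive_high n)"
    using alive_high_subset[of n] by (simp add: card_Diff_subset finite_subset born_high_def)
  moreover have "card (alive_high n) \<le> card (born_high (Suc n))"
    using alive_high_subset[of n] by (simp add: card_mono born_high_def)
  ultimately show ?thesis using card_high_dead_le_deficit[of n] by linarith
qed

lemma born_high_Suc_eq:
  "born_high (Suc n) = {(m, k). m \<le> n \<and> b m \<and> k < z m \<and> f \<le> u m k \<and> u m k \<le> 1}"
  by (auto simp: born_high_def born_def fit_def less_Suc_eq_le)

lemma alive_high_eq: "alive_high n = {v \<in> T n. f \<le> u (fst v) (snd v) \<and> u (fst v) (snd v) \<le> 1}"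
  by (simp add: alive_high_def fit_def)

lemma card_fitness_sym_diff_le:
  assumes "\<And>v. fit v \<le> 1"
  shows "real (card ((fit ` T n - fit ` born_high n) \<union> (fit ` born_high n - fit ` T n)))
    \<le> low_surplus n + 2 * deficit n"
proof -
  have "fit ` T n - fit ` born_high n \<subseteq> fit ` {v \<in> T n. fit v < f}"
    using tree_subset_born[of n] assms by (force simp: born_high_def)
  moreover have "fit ` born_high n - fit ` T n \<subseteq> fit ` ({v \<in> born n. f \<le> fit v} - T n)"
    by (auto simp: born_high_def)
  ultimately have "card ((fit ` T n - fit ` born_high n) \<union> (fit ` born_high n - fit ` T n))
      \<le> card (fit ` {v \<in> T n. fit v < f} \<union> fit ` ({v \<in> born n. f \<le> fit v} - T n))"
    by (intro card_mono) auto
  also have "\<dots> \<le> card {v \<in> T n. fit v < f} + card ({v \<in> born n. f \<le> fit v} - T n)"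
    by (rule order_trans[OF card_Un_le add_mono[OF card_image_le card_image_le]]) auto
  finally show ?thesis
    using card_low_alive_le[of n] card_high_dead_le_deficit[of n] by linarith
qed

lemma card_first_high_births_le:
  assumes "\<And>m. 0 < z m" and "inj (\<lambda>m. u m 0)"
  shows "card {m \<in> {..<n}. b m \<and> f \<le> u m 0 \<and> u m 0 \<le> 1} \<le> card (fit ` born_high n)"
proof (rule card_inj_on_le)
  show "inj_on (\<lambda>m. fit (m, 0)) {m \<in> {..<n}. b m \<and> f \<le> u m 0 \<and> u m 0 \<le> 1}"
    using assms(2) by (auto simp: fit_def inj_on_def inj_def)
  show "(\<lambda>m. fit (m, 0)) ` {m \<in> {..<n}. b m \<and> f \<le> u m 0 \<and> u m 0 \<le> 1} \<subseteq> fit ` born_high n"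
    using assms(1) by (force simp: born_high_def born_def fit_def)
qed (simp add: born_high_def)

lemma card_low_in_batch: "card {v \<in> batch n. fit v < f} = card {k. k < z n \<and> u n k < f}"
proof -
  have "{v \<in> batch n. fit v < f} = Pair n ` {k. k < z n \<and> u n k < f}"
    by (auto simp: batch_def fit_def)
  then show ?thesis by (simp add: card_image inj_on_def)
qed

lemma low_surplus_eq_sum:
  "low_surplus n = (\<Sum>m<n. of_bool (b m) * real (card {k. k < z m \<and> u m k < f})
                           - (1 - of_bool (b m)) * real (x m))"
proof (induction n)
  case (Suc n)
  have "card {v \<in> born (Suc n). fit v < f}
      = card {v \<in> born n. fit v < f} + (if b n then card {k. k < z n \<and> u n k < f} else 0)"
  proof (cases "b n")
    case True
    have "{v \<in> born (Suc n). fit v < f} = {v \<in> born n. fit v < f} \<union> {v \<in> batch n. fit v < f}"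
      using True by (auto simp: born_Suc)
    moreover have "{v \<in> born n. fit v < f} \<inter> {v \<in> batch n. fit v < f} = {}"
      using batch_disjoint_born[of n] by blast
    ultimately show ?thesis using True card_low_in_batch by (simp add: card_Un_disjoint)
  qed (simp add: born_Suc)
  moreover have "removal_demand (Suc n) = removal_demand n + (if b n then 0 else real (x n))"
    by (simp add: removal_demand_def)
  ultimately show ?case using Suc by (simp add: low_surplus_def)
qed (simp add: low_surplus_def born_def removal_demand_def)

lemma deficit_le:
  assumes "\<And>n. \<bar>low_surplus n\<bar> \<le> C + g n" and "mono g"
  shows "deficit n \<le> C + g n"
proof (induction n)
  case 0
  then show ?case using assms(1)[of 0] by (simp add: low_surplus_def born_def removal_demand_def)
next
  case (Suc n)
  have "g n \<le> g (Suc n)" using \<open>mono g\<close> by (simp add: mono_def)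
  then show ?case using Suc assms(1)[of "Suc n"] by simp
qed

lemma finite_born_high [simp]: "finite (born_high n)"
  by (simp add: born_high_def)

lemma card_alive_high_le: "card (alive_high n) \<le> card (born_high (Suc n))"
  using alive_high_subset[of n] by (intro card_mono) (simp_all add: born_high_def)

lemma eventually_card_born_high_minus_alive_high_le:
  assumes "a > 0"
    and surplus: "\<And>n. \<bar>low_surplus n\<bar> \<le> C1 + (2 * real n) powr a"
    and births: "\<And>n. real (z n) \<le> C2 + 2 * (2 * real (Suc n)) powr a"
  shows "\<exists>n0. \<forall>n\<ge>n0.
    real (card (born_high (Suc n))) - real (card (alive_high n)) \<le> (3 * 4 powr a + 1) * real n powr a"
proof -
  have deficit: "deficit n \<le> C1 + (2 * real n) powr a" for n
    using surplus mono_powr_double[of a] \<open>a > 0\<close> by (intro deficit_le) auto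
  obtain n0 where n0: "\<And>n. n \<ge> n0 \<Longrightarrow> C1 + C2 \<le> real n powr a"
    using eventually_const_le_powr[OF \<open>a > 0\<close>, of "C1 + C2"] unfolding eventually_sequentially by blast
  show ?thesis
  proof (intro exI[of _ "max n0 1"] allI impI)
    fix n assume n: "max n0 1 \<le> n"
    have "(2 * real n) powr a \<le> (2 * real (Suc n)) powr a" using \<open>a > 0\<close> by (intro powr_mono2) auto
    moreover have "(2 * real (Suc n)) powr a \<le> 4 powr a * real n powr a"
    proof -
      have "(2 * real (Suc n)) powr a \<le> (4 * real n) powr a" using n \<open>a > 0\<close> by (intro powr_mono2) auto
      then show ?thesis by (simp add: powr_mult)
    qed
    ultimately have "real (card (born_high (Suc n))) - real (card (alive_high n))
        \<le> C1 + C2 + 3 * (4 powr a * real n powr a)"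
      using card_born_high_minus_alive_high[of n] deficit[of n] births[of n] by linarith
    also have "\<dots> \<le> (3 * 4 powr a + 1) * real n powr a"
      using n0[of n] n by (simp add: algebra_simps)
    finally show "real (card (born_high (Suc n))) - real (card (alive_high n))
        \<le> (3 * 4 powr a + 1) * real n powr a" .
  qed
qed

lemma born_high_fitnesses_approach:
  assumes "c > 0" and z_pos: "\<And>m. 0 < z m" and inj: "inj (\<lambda>m. u m 0)" and le1: "\<And>v. fit v \<le> 1"
    and surplus: "\<And>n. \<bar>low_surplus n\<bar> \<le> C1 + (2 * real n) powr (3/4)"
    and first_high: "\<And>n. c * real n - C3 - (2 * real n) powr (3/4)
                         \<le> real (card {m \<in> {..<n}. b m \<and> f \<le> u m 0 \<and> u m 0 \<le> 1})"
  shows "filterlim (\<lambda>n. card (fit ` born_high n)) at_top sequentially"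
    and "e > 0 \<Longrightarrow> eventually (\<lambda>n.
           real (card ((fit ` T n - fit ` born_high n) \<union> (fit ` born_high n - fit ` T n)))
             \<le> e * real (card (fit ` born_high n))) sequentially"
proof -
  have lower: "c * real n - C3 - (2 * real n) powr (3/4) \<le> real (card (fit ` born_high n))" for n
    using first_high[of n] card_first_high_births_le[OF z_pos inj, of n] by linarith
  have "deficit n \<le> C1 + (2 * real n) powr (3/4)" for n
    using surplus mono_powr_double[of "3/4"] by (intro deficit_le) auto
  then have upper: "real (card ((fit ` T n - fit ` born_high n) \<union> (fit ` born_high n - fit ` T n)))
      \<le> 3 * C1 + 3 * (2 * real n) powr (3/4)" for n
    using card_fitness_sym_diff_le[OF le1, of n] surplus[of n] by (smt (verit))
  show "filterlim (\<lambda>n. card (fit ` born_high n)) at_top sequentially"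
    unfolding filterlim_at_top
  proof
    fix N :: nat
    show "eventually (\<lambda>n. N \<le> card (fit ` born_high n)) sequentially"
      using eventually_sublinear_le_linear[OF \<open>c > 0\<close>, of "C3 + real N" 1]
      by eventually_elim (use lower in \<open>smt (verit) of_nat_le_iff\<close>)
  qed
  assume "e > 0"
  show "eventually (\<lambda>n.
           real (card ((fit ` T n - fit ` born_high n) \<union> (fit ` born_high n - fit ` T n)))
             \<le> e * real (card (fit ` born_high n))) sequentially"
    using eventually_sublinear_le_linear[OF mult_pos_pos[OF \<open>e > 0\<close> \<open>c > 0\<close>],
        of "3 * C1 + e * C3" "3 + e"]
  proof (rule eventually_mono)
    fix n
    assume h: "3 * C1 + e * C3 + (3 + e) * (2 * real n) powr (3/4) \<le> e * c * real n"
    have "e * (c * real n - C3 - (2 * real n) powr (3/4)) \<le> e * real (card (fit ` born_high n))"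
      using lower[of n] \<open>e > 0\<close> by (intro mult_left_mono) auto
    then show "real (card ((fit ` T n - fit ` born_high n) \<union> (fit ` born_high n - fit ` T n)))
        \<le> e * real (card (fit ` born_high n))"
      using upper[of n] h by (simp add: algebra_simps)
  qed
qed

end

section \<open>A maximal inequality for uncorrelated sequences\<close>

lemma abs_mult_le_sum_squares: "\<bar>x * y\<bar> \<le> x\<^sup>2 + (y::real)\<^sup>2"
proof -
  have "0 \<le> (\<bar>x\<bar> - \<bar>y\<bar>)\<^sup>2" by simp
  then have "2 * (\<bar>x\<bar> * \<bar>y\<bar>) \<le> x\<^sup>2 + y\<^sup>2" by (simp add: power2_eq_square algebra_simps)
  moreover have "0 \<le> \<bar>x\<bar> * \<bar>y\<bar>" by simp
  ultimately show ?thesis unfolding abs_mult by linarith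
qed

lemma square_add_le_weighted:
  fixes x y t :: real
  assumes "t > 0"
  shows "(x + y)\<^sup>2 \<le> (1 + t) * x\<^sup>2 + (1 + 1/t) * y\<^sup>2"
proof -
  have "0 \<le> (t * x - y)\<^sup>2 / t" using assms by simp
  also have "(t * x - y)\<^sup>2 / t = t * x\<^sup>2 - 2 * x * y + y\<^sup>2 / t"
    using assms by (simp add: power2_eq_square field_simps)
  finally show ?thesis by (simp add: power2_eq_square algebra_simps add_divide_distrib)
qed

lemma ex_power_of_two_between: "1 \<le> n \<Longrightarrow> \<exists>m. n \<le> 2 ^ m \<and> 2 ^ m < 2 * (n::nat)"
proof (induction n rule: dec_induct)
  case base
  then show ?case by (intro exI[of _ 0]) auto
next
  case (step n)
  then obtain m where m: "n \<le> 2 ^ m" "2 ^ m < 2 * n" by blast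
  show ?case
  proof (cases "Suc n \<le> 2 ^ m")
    case True
    then show ?thesis using m by (intro exI[of _ m]) auto
  next
    case False
    then have "2 ^ m = n" using m by auto
    then show ?thesis by (intro exI[of _ "Suc m"]) auto
  qed
qed

lemma summable_inverse_Suc_square: "summable (\<lambda>m::nat. 1 / (real m + 1)\<^sup>2)"
proof -
  have "summable (\<lambda>n::nat. inverse (real n ^ 2))" by (rule inverse_power_summable) simp
  then have "summable (\<lambda>n::nat. inverse (real (Suc n) ^ 2))" by (subst summable_Suc_iff)
  then show ?thesis by (simp add: field_simps)
qed

lemma summable_cube_over_exp:
  assumes "c > 0"
  shows "summable (\<lambda>m::nat. (real m + 1) ^ 3 / exp (c * real m))"
proof (rule summable_comparison_test_ev[OF _ summable_inverse_Suc_square])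
  have "(\<lambda>m. (real m + 1) ^ 3 / exp (c * real m) * (real m + 1)\<^sup>2) \<longlonglongrightarrow> 0"
    using assms by real_asymp
  from order_tendstoD(2)[OF this zero_less_one]
  show "eventually (\<lambda>m. norm ((real m + 1) ^ 3 / exp (c * real m)) \<le> 1 / (real m + 1)\<^sup>2) sequentially"
    by eventually_elim (simp add: field_simps)
qed

locale uncorrelated_seq = prob_space +
  fixes D :: "nat \<Rightarrow> 'a \<Rightarrow> real" and \<sigma> :: real
  assumes D_measurable [measurable]: "\<And>i. D i \<in> borel_measurable M"
    and integrable_D_square: "\<And>i. integrable M (\<lambda>\<omega>. (D i \<omega>)\<^sup>2)"
    and expectation_D_square_le: "\<And>i. expectation (\<lambda>\<omega>. (D i \<omega>)\<^sup>2) \<le> \<sigma>"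
    and uncorrelated: "\<And>i j. i \<noteq> j \<Longrightarrow> expectation (\<lambda>\<omega>. D i \<omega> * D j \<omega>) = 0"
begin

lemma variance_bound_nonneg: "0 \<le> \<sigma>"
proof -
  have "0 \<le> expectation (\<lambda>\<omega>. (D 0 \<omega>)\<^sup>2)" by (rule integral_nonneg_AE) simp
  then show ?thesis using expectation_D_square_le[of 0] by linarith
qed

lemma integrable_D_mult: "integrable M (\<lambda>\<omega>. D i \<omega> * D j \<omega>)"
  by (rule Bochner_Integration.integrable_bound[OF
        Bochner_Integration.integrable_add[OF integrable_D_square[of i] integrable_D_square[of j]]])
     (auto intro!: AE_I2 simp: order_trans[OF abs_mult_le_sum_squares])

lemma
  assumes "finite I"
  shows integrable_sum_square: "integrable M (\<lambda>\<omega>. (\<Sum>i\<in>I. D i \<omega>)\<^sup>2)"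
    and expectation_sum_square: "expectation (\<lambda>\<omega>. (\<Sum>i\<in>I. D i \<omega>)\<^sup>2) = (\<Sum>i\<in>I. expectation (\<lambda>\<omega>. (D i \<omega>)\<^sup>2))"
proof -
  have eq: "(\<lambda>\<omega>. (\<Sum>i\<in>I. D i \<omega>)\<^sup>2) = (\<lambda>\<omega>. \<Sum>i\<in>I. \<Sum>j\<in>I. D i \<omega> * D j \<omega>)"
    by (simp add: power2_eq_square sum_product)
  show "integrable M (\<lambda>\<omega>. (\<Sum>i\<in>I. D i \<omega>)\<^sup>2)"
    unfolding eq by (intro Bochner_Integration.integrable_sum integrable_D_mult)
  have "expectation (\<lambda>\<omega>. (\<Sum>i\<in>I. D i \<omega>)\<^sup>2) = (\<Sum>i\<in>I. \<Sum>j\<in>I. expectation (\<lambda>\<omega>. D i \<omega> * D j \<omega>))"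
    unfolding eq by (simp add: Bochner_Integration.integrable_sum integrable_D_mult)
  also have "\<dots> = (\<Sum>i\<in>I. \<Sum>j\<in>I. if j = i then expectation (\<lambda>\<omega>. (D i \<omega>)\<^sup>2) else 0)"
    by (intro sum.cong refl) (auto simp: uncorrelated power2_eq_square)
  finally show "expectation (\<lambda>\<omega>. (\<Sum>i\<in>I. D i \<omega>)\<^sup>2) = (\<Sum>i\<in>I. expectation (\<lambda>\<omega>. (D i \<omega>)\<^sup>2))"
    using assms by simp
qed

definition block_sum :: "nat \<Rightarrow> nat \<Rightarrow> 'a \<Rightarrow> real" where
  "block_sum a k \<omega> = (\<Sum>i\<in>{a..<a + k}. D i \<omega>)"

definition block_max :: "nat \<Rightarrow> nat \<Rightarrow> 'a \<Rightarrow> real" where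
  "block_max a m \<omega> = (MAX k\<in>{..2 ^ m}. (block_sum a k \<omega>)\<^sup>2)"

lemma block_sum_measurable [measurable]: "block_sum a k \<in> borel_measurable M"
  unfolding block_sum_def by measurable

lemma block_max_measurable [measurable]: "block_max a m \<in> borel_measurable M"
  unfolding block_max_def by (intro borel_measurable_Max) auto

lemma integrable_block_sum_square: "integrable M (\<lambda>\<omega>. (block_sum a k \<omega>)\<^sup>2)"
  unfolding block_sum_def by (rule integrable_sum_square) simp

lemma expectation_block_sum_square_le: "expectation (\<lambda>\<omega>. (block_sum a k \<omega>)\<^sup>2) \<le> real k * \<sigma>"
proof -
  have "expectation (\<lambda>\<omega>. (block_sum a k \<omega>)\<^sup>2) = (\<Sum>i\<in>{a..<a + k}. expectation (\<lambda>\<omega>. (D i \<omega>)\<^sup>2))"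
    unfolding block_sum_def by (rule expectation_sum_square) simp
  also have "\<dots> \<le> (\<Sum>i\<in>{a..<a + k}. \<sigma>)" by (intro sum_mono expectation_D_square_le)
  finally show ?thesis by simp
qed

lemma block_max_ge: "k \<le> 2 ^ m \<Longrightarrow> (block_sum a k \<omega>)\<^sup>2 \<le> block_max a m \<omega>"
  unfolding block_max_def by (rule Max_ge) auto

lemma block_max_nonneg: "0 \<le> block_max a m \<omega>"
  using block_max_ge[of 0 m a \<omega>] by (simp add: block_sum_def)

lemma integrable_block_max: "integrable M (block_max a m)"
proof (rule Bochner_Integration.integrable_bound)
  show "integrable M (\<lambda>\<omega>. \<Sum>k\<le>2 ^ m. (block_sum a k \<omega>)\<^sup>2)"
    by (intro Bochner_Integration.integrable_sum integrable_block_sum_square)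
  show "AE \<omega> in M. norm (block_max a m \<omega>) \<le> norm (\<Sum>k\<le>2 ^ m. (block_sum a k \<omega>)\<^sup>2)"
  proof (intro AE_I2)
    fix \<omega>
    have "block_max a m \<omega> \<le> (\<Sum>k\<le>2 ^ m. (block_sum a k \<omega>)\<^sup>2)"
      unfolding block_max_def by (subst Max_le_iff) (auto intro!: member_le_sum)
    then show "norm (block_max a m \<omega>) \<le> norm (\<Sum>k\<le>2 ^ m. (block_sum a k \<omega>)\<^sup>2)"
      using block_max_nonneg[of a m \<omega>] by simp
  qed
qed simp

text \<open>Splitting a dyadic block into its two halves, with the weight t = m + 1 below, makes the
  constant in the bound on the expected maximum grow only polynomially in m.\<close>

lemma block_max_Suc_le:
  fixes t :: real
  assumes t: "t > 0"
  shows "block_max a (Suc m) \<omega>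
    \<le> block_max a m \<omega> + (1 + 1/t) * block_max (a + 2 ^ m) m \<omega> + (1 + t) * (block_sum a (2 ^ m) \<omega>)\<^sup>2"
proof -
  have nonneg: "0 \<le> (1 + 1/t) * block_max (a + 2 ^ m) m \<omega>" "0 \<le> (1 + t) * (block_sum a (2 ^ m) \<omega>)\<^sup>2"
    "0 \<le> block_max a m \<omega>"
    using t block_max_nonneg by auto
  show ?thesis unfolding block_max_def[of a "Suc m"]
  proof (subst Max_le_iff, simp, simp, intro ballI)
    fix y assume "y \<in> (\<lambda>k. (block_sum a k \<omega>)\<^sup>2) ` {..2 ^ Suc m}"
    then obtain k where k: "k \<le> 2 ^ Suc m" "y = (block_sum a k \<omega>)\<^sup>2" by auto
    show "y \<le> block_max a m \<omega> + (1 + 1/t) * block_max (a + 2 ^ m) m \<omega>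
              + (1 + t) * (block_sum a (2 ^ m) \<omega>)\<^sup>2"
    proof (cases "k \<le> 2 ^ m")
      case True
      then show ?thesis using k block_max_ge[of k m a \<omega>] nonneg by linarith
    next
      case False
      define j where "j = k - 2 ^ m"
      have j: "k = 2 ^ m + j" "j \<le> 2 ^ m" using False k(1) by (auto simp: j_def)
      have "block_sum a k \<omega> = block_sum a (2 ^ m) \<omega> + block_sum (a + 2 ^ m) j \<omega>"
        unfolding block_sum_def j(1)
        by (subst sum.atLeastLessThan_concat[symmetric, of a "a + 2 ^ m"]) (auto simp: add.assoc)
      then have "y \<le> (1 + t) * (block_sum a (2 ^ m) \<omega>)\<^sup>2 + (1 + 1/t) * (block_sum (a + 2 ^ m) j \<omega>)\<^sup>2"
        using k(2) square_add_le_weighted[OF t] by simp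
      also have "\<dots> \<le> (1 + t) * (block_sum a (2 ^ m) \<omega>)\<^sup>2 + (1 + 1/t) * block_max (a + 2 ^ m) m \<omega>"
        using block_max_ge[OF j(2)] t by (intro add_left_mono mult_left_mono) auto
      finally show ?thesis using nonneg by linarith
    qed
  qed
qed

lemma expectation_block_max_le: "expectation (block_max a m) \<le> (real m + 1) ^ 3 * 2 ^ m * \<sigma>"
proof (induction m arbitrary: a)
  case 0
  have "block_max a 0 \<omega> = (D a \<omega>)\<^sup>2" for \<omega>
  proof -
    have "{..(2::nat) ^ 0} = {0, 1}" by auto
    then show ?thesis unfolding block_max_def block_sum_def by simp
  qed
  then show ?case using expectation_D_square_le[of a] by simp
next
  case (Suc m)
  define t :: real where "t = real m + 1"
  have t: "t > 0" by (simp add: t_def)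
  have "expectation (block_max a (Suc m))
      \<le> expectation (\<lambda>\<omega>. block_max a m \<omega> + (1 + 1/t) * block_max (a + 2 ^ m) m \<omega>
                        + (1 + t) * (block_sum a (2 ^ m) \<omega>)\<^sup>2)"
    by (intro integral_mono integrable_block_max Bochner_Integration.integrable_add
        integrable_mult_right integrable_block_sum_square block_max_Suc_le t)
  also have "\<dots> = expectation (block_max a m) + (1 + 1/t) * expectation (block_max (a + 2 ^ m) m)
                 + (1 + t) * expectation (\<lambda>\<omega>. (block_sum a (2 ^ m) \<omega>)\<^sup>2)"
    by (simp add: integrable_block_max integrable_block_sum_square Bochner_Integration.integrable_add)
  also have "\<dots> \<le> (real m + 1) ^ 3 * 2 ^ m * \<sigma> + (1 + 1/t) * ((real m + 1) ^ 3 * 2 ^ m * \<sigma>)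
                 + (1 + t) * (real (2 ^ m) * \<sigma>)"
    using t by (intro add_mono Suc mult_left_mono expectation_block_sum_square_le) auto
  also have "\<dots> = (2 * (real m + 1) ^ 3 + (real m + 1)\<^sup>2 + real m + 2) * 2 ^ m * \<sigma>"
    by (simp add: t_def field_simps power3_eq_cube power2_eq_square)
  also have "\<dots> \<le> 2 * (real m + 2) ^ 3 * 2 ^ m * \<sigma>"
    using variance_bound_nonneg
    by (intro mult_right_mono) (auto simp: power3_eq_cube power2_eq_square algebra_simps)
  finally show ?case by (simp add: algebra_simps)
qed

lemma AE_eventually_block_max_le:
  assumes "\<delta> > 0"
  shows "AE \<omega> in M. eventually (\<lambda>m. block_max 0 m \<omega> \<le> (2 ^ m) powr (1 + 2 * \<delta>)) sequentially"
proof -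
  define c where "c = 2 * \<delta> * ln 2"
  have c: "c > 0" using assms by (simp add: c_def)
  define A where "A m = {\<omega> \<in> space M. (2 ^ m) powr (1 + 2 * \<delta>) < block_max 0 m \<omega>}" for m
  have A_sets: "A m \<in> sets M" for m unfolding A_def by measurable
  have threshold_eq: "(2 ^ m) powr (1 + 2 * \<delta>) = 2 ^ m * exp (c * real m)" for m
  proof -
    have "((2::real) ^ m) powr (2 * \<delta>) = exp (c * real m)"
      by (simp add: powr_def c_def ln_realpow algebra_simps)
    then show ?thesis by (simp add: powr_add)
  qed
  have measure_A: "measure M (A m) \<le> \<sigma> * (real m + 1) ^ 3 / exp (c * real m)" for m
  proof -
    have "measure M (A m) \<le> measure M {\<omega> \<in> space M. (2 ^ m) powr (1 + 2 * \<delta>) \<le> block_max 0 m \<omega>}"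
      unfolding A_def by (intro finite_measure_mono) auto
    also have "\<dots> \<le> expectation (block_max 0 m) / (2 ^ m) powr (1 + 2 * \<delta>)"
      by (rule integral_Markov_inequality_measure[OF integrable_block_max _ AE_I2])
         (auto simp: block_max_nonneg)
    also have "\<dots> \<le> (real m + 1) ^ 3 * 2 ^ m * \<sigma> / (2 ^ m) powr (1 + 2 * \<delta>)"
      by (intro divide_right_mono expectation_block_max_le) simp
    finally show ?thesis unfolding threshold_eq by (simp add: mult_ac)
  qed
  have "summable (\<lambda>m. measure M (A m))"
    by (rule summable_comparison_test'[OF summable_mult[OF summable_cube_over_exp[OF c], of \<sigma>]])
       (simp add: measure_A)
  then have "AE \<omega> in M. eventually (\<lambda>m. \<omega> \<in> space M - A m) sequentially"
    by (intro borel_cantelli_AE1[OF A_sets]) (auto simp: less_top[symmetric])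
  then show ?thesis by (auto simp: A_def not_less elim!: AE_mp[OF _ AE_I2] eventually_mono)
qed

lemma partial_sum_bound_of_block_max_le:
  assumes "\<delta> > 0" and m0: "\<And>m. m0 \<le> m \<Longrightarrow> block_max 0 m \<omega> \<le> (2 ^ m) powr (1 + 2 * \<delta>)"
  shows "\<exists>C. \<forall>n. \<bar>\<Sum>i<n. D i \<omega>\<bar> \<le> C + (2 * real n) powr (1/2 + \<delta>)"
proof (intro exI allI)
  define C where "C = Max ((\<lambda>n. \<bar>\<Sum>i<n. D i \<omega>\<bar>) ` {..<2 ^ m0})"
  fix n
  show "\<bar>\<Sum>i<n. D i \<omega>\<bar> \<le> C + (2 * real n) powr (1/2 + \<delta>)"
  proof (cases "n < 2 ^ m0")
    case True
    then have "\<bar>\<Sum>i<n. D i \<omega>\<bar> \<le> C" unfolding C_def by (intro Max_ge) auto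
    then show ?thesis by (smt (verit) powr_ge_zero)
  next
    case False
    have "\<bar>\<Sum>i<0. D i \<omega>\<bar> \<le> C" unfolding C_def by (rule Max_ge) (auto simp: image_iff intro!: bexI[of _ 0])
    then have C: "0 \<le> C" by simp
    have "1 \<le> n" using False by (metis less_one not_less one_le_numeral one_le_power order_trans)
    then obtain m where m: "n \<le> 2 ^ m" "2 ^ m < 2 * n" using ex_power_of_two_between by blast
    have "(2::nat) ^ m0 \<le> 2 ^ m" using False m(1) by linarith
    then have "m0 \<le> m" by (simp add: power_increasing_iff)
    have "(\<Sum>i<n. D i \<omega>)\<^sup>2 \<le> (2 ^ m) powr (1 + 2 * \<delta>)"
      using block_max_ge[OF m(1), of 0 \<omega>] m0[OF \<open>m0 \<le> m\<close>] by (simp add: block_sum_def atLeast0LessThan)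
    also have "\<dots> \<le> (2 * real n) powr (1 + 2 * \<delta>)"
    proof -
      have "real (2 ^ m) \<le> real (2 * n)" using m(2) by (simp only: of_nat_le_iff)
      then show ?thesis using assms(1) by (intro powr_mono2) auto
    qed
    also have "\<dots> = ((2 * real n) powr (1/2 + \<delta>))\<^sup>2"
    proof -
      have "(1::real) + 2 * \<delta> = (1/2 + \<delta>) + (1/2 + \<delta>)" by simp
      then have "(2 * real n) powr (1 + 2 * \<delta>)
          = (2 * real n) powr (1/2 + \<delta>) * (2 * real n) powr (1/2 + \<delta>)"
        by (metis powr_add)
      then show ?thesis by (simp only: power2_eq_square)
    qed
    finally have "\<bar>\<Sum>i<n. D i \<omega>\<bar>\<^sup>2 \<le> ((2 * real n) powr (1/2 + \<delta>))\<^sup>2"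
      by simp
    then have "\<bar>\<Sum>i<n. D i \<omega>\<bar> \<le> (2 * real n) powr (1/2 + \<delta>)"
      by (rule power2_le_imp_le) simp
    then show ?thesis using C by linarith
  qed
qed

lemma AE_partial_sum_bound:
  assumes "\<delta> > 0"
  shows "AE \<omega> in M. \<exists>C. \<forall>n. \<bar>\<Sum>i<n. D i \<omega>\<bar> \<le> C + (2 * real n) powr (1/2 + \<delta>)"
  using AE_eventually_block_max_le[OF assms]
  by eventually_elim
     (auto simp: eventually_sequentially intro: partial_sum_bound_of_block_max_le[OF assms])

end

lemma (in prob_space) uncorrelated_seqI:
  fixes V :: "nat \<Rightarrow> 'a \<Rightarrow> real"
  assumes meas: "\<And>n. V n \<in> borel_measurable M" and int2: "\<And>n. integrable M (\<lambda>\<omega>. (V n \<omega>)\<^sup>2)"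
    and var: "\<And>n. expectation (\<lambda>\<omega>. (V n \<omega>)\<^sup>2) \<le> \<sigma>" and mean: "\<And>n. expectation (V n) = 0"
    and ind: "\<And>n m. n \<noteq> m \<Longrightarrow> indep_var borel (V n) borel (V m)"
  shows "uncorrelated_seq M V \<sigma>"
proof unfold_locales
  have int: "integrable M (V n)" for n by (rule square_integrable_imp_integrable[OF meas int2])
  fix i j :: nat assume "i \<noteq> j"
  then show "expectation (\<lambda>\<omega>. V i \<omega> * V j \<omega>) = 0"
    using indep_var_lebesgue_integral[OF ind[OF \<open>i \<noteq> j\<close>] int int] mean by simp
qed (use meas int2 var in auto)

section \<open>The random model\<close>

lemma measurable_count_space_of_real:
  fixes g :: "'a \<Rightarrow> nat"
  assumes [measurable]: "(\<lambda>\<omega>. real (g \<omega>)) \<in> borel_measurable M"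
  shows "g \<in> M \<rightarrow>\<^sub>M count_space UNIV"
proof (subst measurable_count_space_eq2_countable, safe)
  fix a :: nat
  have "g -` {a} \<inter> space M = {\<omega> \<in> space M. real (g \<omega>) = real a}" by auto
  also have "\<dots> \<in> sets M" by measurable
  finally show "g -` {a} \<inter> space M \<in> sets M" .
qed auto

lemma
  fixes V W :: "'a \<Rightarrow> nat" and g :: "nat \<Rightarrow> real"
  assumes V: "V \<in> M \<rightarrow>\<^sub>M count_space UNIV" and W: "W \<in> M \<rightarrow>\<^sub>M count_space UNIV"
    and eq: "distr M (count_space UNIV) V = distr M (count_space UNIV) W"
  shows integral_comp_eq_of_distr_eq: "integral\<^sup>L M (\<lambda>\<omega>. g (V \<omega>)) = integral\<^sup>L M (\<lambda>\<omega>. g (W \<omega>))"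
    and integrable_comp_eq_of_distr_eq: "integrable M (\<lambda>\<omega>. g (V \<omega>)) \<longleftrightarrow> integrable M (\<lambda>\<omega>. g (W \<omega>))"
proof -
  have g: "g \<in> borel_measurable (count_space UNIV)" by simp
  show "integral\<^sup>L M (\<lambda>\<omega>. g (V \<omega>)) = integral\<^sup>L M (\<lambda>\<omega>. g (W \<omega>))"
    using integral_distr[OF V g] integral_distr[OF W g] eq by simp
  show "integrable M (\<lambda>\<omega>. g (V \<omega>)) \<longleftrightarrow> integrable M (\<lambda>\<omega>. g (W \<omega>))"
    using integrable_distr_eq[OF V g] integrable_distr_eq[OF W g] eq by simp
qed

lemma (in prob_space) indep_vars_reindex:
  assumes ind: "indep_vars (\<lambda>_. N) V (h ` I)" and inj: "inj_on h I"
  shows "indep_vars (\<lambda>_. N) (\<lambda>i. V (h i)) I"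
proof -
  define G where "G j = sigma_sets (space M) {V j -` A \<inter> space M | A. A \<in> sets N}" for j
  have rv: "\<forall>j\<in>h ` I. random_variable N (V j)" and IS: "indep_sets G (h ` I)"
    using ind unfolding indep_vars_def G_def by auto
  have "indep_sets (\<lambda>i. G (h i)) I"
  proof (rule indep_setsI)
    fix i assume "i \<in> I" then show "G (h i) \<subseteq> events" using IS unfolding indep_sets_def by auto
  next
    fix A J assume J: "J \<noteq> {}" "J \<subseteq> I" "finite J" and A: "\<forall>j\<in>J. A j \<in> G (h j)"
    define A' where "A' = A \<circ> the_inv_into J h"
    have injJ: "inj_on h J" using inj J(2) by (rule inj_on_subset)
    have A'h: "A' (h i) = A i" if "i \<in> J" for i
      using the_inv_into_f_f[OF injJ that] by (simp add: A'_def)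
    have "prob (\<Inter>(A' ` (h ` J))) = (\<Prod>j\<in>h ` J. prob (A' j))"
      by (rule indep_setsD[OF IS]) (use J A A'h in auto)
    moreover have "\<Inter>(A' ` (h ` J)) = \<Inter>(A ` J)" using A'h by (auto simp: image_image)
    moreover have "(\<Prod>j\<in>h ` J. prob (A' j)) = (\<Prod>i\<in>J. prob (A i))"
      by (subst prod.reindex[OF injJ]) (simp add: A'h)
    ultimately show "prob (\<Inter>(A ` J)) = (\<Prod>j\<in>J. prob (A j))" by simp
  qed
  then show ?thesis using rv unfolding indep_vars_def G_def by auto
qed

text \<open>Leaves high fitnesses unchanged and pushes U[0,1] forward to U[f,1].\<close>

definition relabel :: "real \<Rightarrow> real \<Rightarrow> real" where
  "relabel f t = (if f \<le> t then t else f + (1 - f) * t / f)"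

lemma relabel_measurable[measurable]: "relabel f \<in> borel_measurable borel"
  unfolding relabel_def by measurable

lemma relabel_sublevel:
  fixes f x :: real assumes f: "0 < f" "f < 1"
  shows "x < f \<Longrightarrow> {t. relabel f t \<le> x} \<inter> {0..1} = {}"
    and "1 \<le> x \<Longrightarrow> {t. relabel f t \<le> x} \<inter> {0..1} = {0..1}"
    and "f \<le> x \<Longrightarrow> x < 1 \<Longrightarrow> {t. relabel f t \<le> x} \<inter> {0..1} = {0..f * (x - f) / (1 - f)} \<union> {f..x}"
proof -
  have ge: "f \<le> relabel f t" if "0 \<le> t" for t
    using f that by (auto simp: relabel_def)
  show "x < f \<Longrightarrow> {t. relabel f t \<le> x} \<inter> {0..1} = {}" using ge by force
  have le1: "relabel f t \<le> 1" if "0 \<le> t" "t \<le> 1" for t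
  proof (cases "f \<le> t")
    case False
    have "(1-f)*t \<le> (1-f)*f" using False f by (intro mult_left_mono) auto
    then have "(1-f)*t/f \<le> 1-f" using f by (simp add: divide_le_eq)
    then show ?thesis using False by (simp add: relabel_def)
  qed (use that in \<open>simp add: relabel_def\<close>)
  show "1 \<le> x \<Longrightarrow> {t. relabel f t \<le> x} \<inter> {0..1} = {0..1}" using le1 by force
  assume x: "f \<le> x" "x < 1"
  have a: "f * (x - f) / (1 - f) < f" using f x by (simp add: divide_less_eq algebra_simps)
  show "{t. relabel f t \<le> x} \<inter> {0..1} = {0..f * (x - f) / (1 - f)} \<union> {f..x}"
  proof (intro set_eqI iffI)
    fix t assume t: "t \<in> {t. relabel f t \<le> x} \<inter> {0..1}"
    show "t \<in> {0..f * (x - f) / (1 - f)} \<union> {f..x}"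
    proof (cases "f \<le> t")
      case True then show ?thesis using t by (auto simp: relabel_def)
    next
      case False
      then have "f + (1 - f) * t / f \<le> x" using t by (auto simp: relabel_def)
      then have "(1 - f) * t \<le> (x - f) * f" using f by (simp add: field_simps)
      then have "t \<le> f * (x - f) / (1 - f)" using f by (simp add: field_simps)
      then show ?thesis using t by auto
    qed
  next
    fix t assume t: "t \<in> {0..f * (x - f) / (1 - f)} \<union> {f..x}"
    show "t \<in> {t. relabel f t \<le> x} \<inter> {0..1}"
    proof (cases "t \<in> {f..x}")
      case True then show ?thesis using x f by (auto simp: relabel_def)
    next
      case False
      then have t1: "0 \<le> t" "t \<le> f * (x - f) / (1 - f)" using t by auto
      then have tf: "\<not> f \<le> t" using a by auto
      have "(1 - f) * t \<le> (x - f) * f" using t1(2) f by (simp add: field_simps)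
      then have "f + (1 - f) * t / f \<le> x" using f by (simp add: field_simps)
      then show ?thesis using tf t1 a f by (auto simp: relabel_def)
    qed
  qed
qed

lemma measure_relabel_sublevel:
  fixes f x :: real assumes f: "0 < f" "f < 1"
  shows "measure lborel ({t. relabel f t \<le> x} \<inter> {0..1}) = measure lborel ({f..1} \<inter> {..x}) / (1 - f)"
proof (cases "x < f")
  case True
  then have "{f..1} \<inter> {..x} = {}" by auto
  then show ?thesis using relabel_sublevel(1)[OF f True] by simp
next
  case False
  show ?thesis
  proof (cases "1 \<le> x")
    case True
    then have "{f..1} \<inter> {..x} = {f..1}" by auto
    then show ?thesis using relabel_sublevel(2)[OF f True] f by simp
  next
    case x1: False
    have fx: "f \<le> x" "x < 1" using False x1 by auto
    define a where "a = f * (x - f) / (1 - f)"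
    have a: "0 \<le> a" "a < f" using f fx by (auto simp: a_def divide_less_eq algebra_simps)
    have "emeasure lborel ({0..a} \<union> {f..x}) = emeasure lborel {0..a} + emeasure lborel {f..x}"
      by (rule plus_emeasure[symmetric]) (use a in auto)
    also have "\<dots> = ennreal (a + (x - f))" using a fx by (simp add: ennreal_plus)
    finally have "measure lborel ({0..a} \<union> {f..x}) = a + (x - f)"
      using a fx by (simp add: measure_def enn2real_plus)
    moreover have "a + (x - f) = (x - f) / (1 - f)" using f by (simp add: a_def field_simps)
    moreover have "{f..1} \<inter> {..x} = {f..x}" using fx by auto
    ultimately show ?thesis using relabel_sublevel(3)[OF f fx] fx by (simp add: a_def)
  qed
qed

locale evolution_model = prob_space M for M :: "'a measure" +
  fixes X Z :: "nat \<Rightarrow> 'a \<Rightarrow> nat" and B :: "nat \<Rightarrow> 'a \<Rightarrow> bool"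
    and U :: "nat \<Rightarrow> nat \<Rightarrow> 'a \<Rightarrow> real" and p :: real and Mx :: nat
  assumes indep: "indep_vars (\<lambda>_. borel) (model_vars X Z B U) UNIV"
    and X_id: "\<And>n. distr M (count_space UNIV) (X n) = distr M (count_space UNIV) (X 0)"
    and Z_id: "\<And>n. distr M (count_space UNIV) (Z n) = distr M (count_space UNIV) (Z 0)"
    and B_law: "\<And>n. measure M {\<omega> \<in> space M. B n \<omega>} = p"
    and U_law: "\<And>n k. distr M lborel (U n k) = uniform_measure lborel {0..1}"
    and pos: "AE \<omega> in M. \<forall>n. 0 < X n \<omega> \<and> 0 < Z n \<omega>"
    and X_bdd: "AE \<omega> in M. \<forall>n. X n \<omega> \<le> Mx"
    and Z2: "integrable M (\<lambda>\<omega>. (real (Z 0 \<omega>))\<^sup>2)"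
begin

lemma model_var_measurable: "model_vars X Z B U i \<in> borel_measurable M"
  using indep unfolding indep_vars_def by auto

lemma X_real_measurable[measurable]: "(\<lambda>\<omega>. real (X n \<omega>)) \<in> borel_measurable M"
  using model_var_measurable[of "SX n"] by simp
lemma Z_real_measurable[measurable]: "(\<lambda>\<omega>. real (Z n \<omega>)) \<in> borel_measurable M"
  using model_var_measurable[of "SZ n"] by simp
lemma B_real_measurable[measurable]: "(\<lambda>\<omega>. of_bool (B n \<omega>) :: real) \<in> borel_measurable M"
  using model_var_measurable[of "SB n"] by simp
lemma U_measurable[measurable]: "U n k \<in> borel_measurable M"
  using model_var_measurable[of "SU n k"] by simp

lemma B_measurable[measurable]: "Measurable.pred M (B n)"
proof -
  have "{\<omega> \<in> space M. B n \<omega>} = {\<omega> \<in> space M. (of_bool (B n \<omega>) :: real) = 1}" by auto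
  also have "\<dots> \<in> sets M" by measurable
  finally show ?thesis by (simp add: pred_def)
qed

lemma X_measurable[measurable]: "X n \<in> M \<rightarrow>\<^sub>M count_space UNIV"
  by (rule measurable_count_space_of_real) simp

lemma Z_measurable[measurable]: "Z n \<in> M \<rightarrow>\<^sub>M count_space UNIV"
  by (rule measurable_count_space_of_real) simp

lemma integrable_Z_square: "integrable M (\<lambda>\<omega>. (real (Z n \<omega>))\<^sup>2)"
  using integrable_comp_eq_of_distr_eq[OF Z_measurable Z_measurable Z_id, of "\<lambda>z. (real z)\<^sup>2" n] Z2
  by simp
lemma integrable_Z: "integrable M (\<lambda>\<omega>. real (Z n \<omega>))"
proof (rule Bochner_Integration.integrable_bound[OF integrable_Z_square[of n]])
  show "AE \<omega> in M. norm (real (Z n \<omega>)) \<le> norm ((real (Z n \<omega>))\<^sup>2)"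
  proof (rule AE_I2)
    fix \<omega> show "norm (real (Z n \<omega>)) \<le> norm ((real (Z n \<omega>))\<^sup>2)"
      by (cases "Z n \<omega>") (auto simp: power2_eq_square)
  qed
qed simp

lemma integrable_X: "integrable M (\<lambda>\<omega>. real (X n \<omega>))"
  by (rule integrable_const_bound[where B="real Mx"]) (use X_bdd in \<open>auto elim: eventually_mono\<close>)

lemma expectation_X_eq: "expectation (\<lambda>\<omega>. real (X n \<omega>)) = expectation (\<lambda>\<omega>. real (X 0 \<omega>))"
  by (rule integral_comp_eq_of_distr_eq[OF X_measurable X_measurable X_id])

lemma expectation_Z_eq: "expectation (\<lambda>\<omega>. real (Z n \<omega>)) = expectation (\<lambda>\<omega>. real (Z 0 \<omega>))"
  by (rule integral_comp_eq_of_distr_eq[OF Z_measurable Z_measurable Z_id])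

lemma expectation_Z_square_eq:
  "expectation (\<lambda>\<omega>. (real (Z n \<omega>))\<^sup>2) = expectation (\<lambda>\<omega>. (real (Z 0 \<omega>))\<^sup>2)"
  by (rule integral_comp_eq_of_distr_eq[OF Z_measurable Z_measurable Z_id])

lemma prob_fitness_in:
  assumes [measurable]: "A \<in> sets borel"
  shows "prob {\<omega> \<in> space M. U n k \<omega> \<in> A} = measure lborel (A \<inter> {0..1})"
proof -
  have "prob {\<omega> \<in> space M. U n k \<omega> \<in> A} = measure (distr M lborel (U n k)) A"
    by (subst measure_distr) (auto simp: vimage_def Int_def conj_commute)
  also have "\<dots> = measure (uniform_measure lborel {0..1}) A" by (simp add: U_law)
  also have "\<dots> = measure lborel (A \<inter> {0..1})"
    by (simp add: measure_def emeasure_uniform_measure Int_commute divide_ennreal_def)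
  finally show ?thesis .
qed

definition muX where "muX = expectation (\<lambda>\<omega>. real (X 0 \<omega>))"
definition muZ where "muZ = expectation (\<lambda>\<omega>. real (Z 0 \<omega>))"

lemma prob_birth_and_low:
  fixes k :: nat and f :: real
  shows "prob {\<omega> \<in> space M. B n \<omega> \<and> k < Z n \<omega> \<and> U n k \<omega> < f}
       = p * prob {\<omega> \<in> space M. k < Z n \<omega>} * prob {\<omega> \<in> space M. U n k \<omega> < f}"
proof -
  define J where "J = {SB n, SZ n, SU n k}"
  define A where
    "A i = (case i of SB _ \<Rightarrow> {1} | SZ _ \<Rightarrow> {real k<..} | SU _ _ \<Rightarrow> {..<f} | SX _ \<Rightarrow> UNIV)" for i
  have "prob (\<Inter>i\<in>J. model_vars X Z B U i -` A i \<inter> space M)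
      = (\<Prod>i\<in>J. prob (model_vars X Z B U i -` A i \<inter> space M))"
    by (rule indep_varsD[OF indep]) (auto simp: J_def A_def split: src.split)
  moreover have "(\<Inter>i\<in>J. model_vars X Z B U i -` A i \<inter> space M)
      = {\<omega> \<in> space M. B n \<omega> \<and> k < Z n \<omega> \<and> U n k \<omega> < f}"
    by (auto simp: J_def A_def)
  moreover have "model_vars X Z B U (SB n) -` A (SB n) \<inter> space M = {\<omega> \<in> space M. B n \<omega>}"
    by (auto simp: A_def)
  moreover have "model_vars X Z B U (SZ n) -` A (SZ n) \<inter> space M = {\<omega> \<in> space M. k < Z n \<omega>}"
    by (auto simp: A_def)
  moreover have "model_vars X Z B U (SU n k) -` A (SU n k) \<inter> space M = {\<omega> \<in> space M. U n k \<omega> < f}"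
    by (auto simp: A_def)
  ultimately show ?thesis by (simp add: J_def B_law)
qed

lemma nn_integral_Z_eq_suminf:
  "(\<integral>\<^sup>+\<omega>. ennreal (real (Z n \<omega>)) \<partial>M) = (\<Sum>k. ennreal (prob {\<omega> \<in> space M. k < Z n \<omega>}))"
proof -
  have "(\<integral>\<^sup>+\<omega>. ennreal (real (Z n \<omega>)) \<partial>M) = (\<integral>\<^sup>+\<omega>. (\<Sum>k. indicator {\<omega> \<in> space M. k < Z n \<omega>} \<omega>) \<partial>M)"
  proof (rule nn_integral_cong)
    fix \<omega> assume \<omega>: "\<omega> \<in> space M"
    have "(\<Sum>k. indicator {\<omega> \<in> space M. k < Z n \<omega>} \<omega> :: ennreal)
        = (\<Sum>k\<in>{..<Z n \<omega>}. indicator {\<omega> \<in> space M. k < Z n \<omega>} \<omega>)"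
      by (rule suminf_finite) (auto simp: indicator_def)
    also have "\<dots> = (\<Sum>k\<in>{..<Z n \<omega>}. 1)" using \<omega> by (intro sum.cong) (auto simp: indicator_def)
    finally show "ennreal (real (Z n \<omega>)) = (\<Sum>k. indicator {\<omega> \<in> space M. k < Z n \<omega>} \<omega>)"
      by (simp add: ennreal_of_nat_eq_real_of_nat)
  qed
  also have "\<dots> = (\<Sum>k. \<integral>\<^sup>+\<omega>. indicator {\<omega> \<in> space M. k < Z n \<omega>} \<omega> \<partial>M)"
    by (rule nn_integral_suminf) measurable
  also have "\<dots> = (\<Sum>k. ennreal (prob {\<omega> \<in> space M. k < Z n \<omega>}))"
    by (subst nn_integral_indicator) (auto simp: emeasure_eq_measure)
  finally show ?thesis .
qed

definition low_count :: "nat \<Rightarrow> real \<Rightarrow> 'a \<Rightarrow> real" where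
  "low_count n f \<omega> = real (card {k. k < Z n \<omega> \<and> U n k \<omega> < f})"

lemma low_count_eq_sum: "low_count n f \<omega> = (\<Sum>k<Z n \<omega>. of_bool (U n k \<omega> < f))"
  unfolding low_count_def by (simp add: Int_def)

lemma low_count_measurable[measurable]: "low_count n f \<in> borel_measurable M"
proof -
  have "(\<lambda>\<omega>. (\<lambda>z \<omega>. (\<Sum>k<z. of_bool (U n k \<omega> < f) :: real)) (Z n \<omega>) \<omega>) \<in> borel_measurable M"
    by (rule measurable_compose_countable'[where I=UNIV]) auto
  then show ?thesis unfolding low_count_eq_sum[abs_def] by simp
qed

lemma low_count_bounds: "0 \<le> low_count n f \<omega>" "low_count n f \<omega> \<le> real (Z n \<omega>)"
proof -
  have "card {k. k < Z n \<omega> \<and> U n k \<omega> < f} \<le> card {..<Z n \<omega>}" by (rule card_mono) auto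
  then show "low_count n f \<omega> \<le> real (Z n \<omega>)" unfolding low_count_def by simp
qed (simp add: low_count_def)

lemma prob_fitness_less: "0 \<le> f \<Longrightarrow> f \<le> 1 \<Longrightarrow> prob {\<omega> \<in> space M. U n k \<omega> < f} = f"
proof -
  assume f: "0 \<le> f" "f \<le> 1"
  have "prob {\<omega> \<in> space M. U n k \<omega> < f} = prob {\<omega> \<in> space M. U n k \<omega> \<in> {..<f}}" by simp
  also have "\<dots> = measure lborel ({..<f} \<inter> {0..1})" by (rule prob_fitness_in) simp
  also have "{..<f} \<inter> {0..1} = {0..<f}" using f by auto
  finally show ?thesis using f by simp
qed

lemma p_nonneg: "0 \<le> p" using B_law[of 0] measure_nonneg by metis

lemma muZ_nonneg: "0 \<le> muZ" unfolding muZ_def by (rule integral_nonneg_AE) simp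

lemma birth_low_count_eq_suminf:
  assumes "\<omega> \<in> space M"
  shows "ennreal (of_bool (B n \<omega>) * low_count n f \<omega>)
    = (\<Sum>k. indicator {\<omega> \<in> space M. B n \<omega> \<and> k < Z n \<omega> \<and> U n k \<omega> < f} \<omega>)"
proof -
  let ?E = "\<lambda>k. {\<omega> \<in> space M. B n \<omega> \<and> k < Z n \<omega> \<and> U n k \<omega> < f}"
  have "(\<Sum>k. indicator (?E k) \<omega> :: ennreal) = (\<Sum>k\<in>{..<Z n \<omega>}. indicator (?E k) \<omega>)"
    by (rule suminf_finite) (auto simp: indicator_def)
  also have "\<dots> = (\<Sum>k\<in>{..<Z n \<omega>}. of_bool (B n \<omega> \<and> U n k \<omega> < f))"
    using assms by (intro sum.cong) (auto simp: indicator_def)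
  also have "\<dots> = of_nat (card {k \<in> {..<Z n \<omega>}. B n \<omega> \<and> U n k \<omega> < f})"
    by (simp add: Int_def)
  also have "\<dots> = ennreal (of_bool (B n \<omega>) * low_count n f \<omega>)"
    by (cases "B n \<omega>")
       (auto simp: low_count_def ennreal_of_nat_eq_real_of_nat intro!: arg_cong[where f = card])
  finally show ?thesis by simp
qed

lemma
  assumes f: "0 \<le> f" "f \<le> 1"
  shows integrable_birth_low_count: "integrable M (\<lambda>\<omega>. of_bool (B n \<omega>) * low_count n f \<omega>)"
    and expectation_birth_low_count: "expectation (\<lambda>\<omega>. of_bool (B n \<omega>) * low_count n f \<omega>) = p * f * muZ"
proof -
  show int: "integrable M (\<lambda>\<omega>. of_bool (B n \<omega>) * low_count n f \<omega>)"
    by (rule Bochner_Integration.integrable_bound[OF integrable_Z[of n]])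
       (auto intro!: AE_I2 simp: low_count_bounds)
  define E where "E k = {\<omega> \<in> space M. B n \<omega> \<and> k < Z n \<omega> \<and> U n k \<omega> < f}" for k
  have "(\<integral>\<^sup>+\<omega>. ennreal (of_bool (B n \<omega>) * low_count n f \<omega>) \<partial>M) = (\<integral>\<^sup>+\<omega>. (\<Sum>k. indicator (E k) \<omega>) \<partial>M)"
    unfolding E_def by (intro nn_integral_cong birth_low_count_eq_suminf)
  also have "\<dots> = (\<Sum>k. \<integral>\<^sup>+\<omega>. indicator (E k) \<omega> \<partial>M)"
    by (rule nn_integral_suminf) (simp add: E_def)
  also have "\<dots> = (\<Sum>k. ennreal (p * f) * ennreal (prob {\<omega> \<in> space M. k < Z n \<omega>}))"
  proof (rule suminf_cong)
    fix k
    have "(\<integral>\<^sup>+\<omega>. indicator (E k) \<omega> \<partial>M) = ennreal (prob (E k))"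
      by (subst nn_integral_indicator) (auto simp: emeasure_eq_measure E_def)
    also have "prob (E k) = p * prob {\<omega> \<in> space M. k < Z n \<omega>} * f"
      unfolding E_def using prob_birth_and_low prob_fitness_less[OF f] by simp
    finally show "(\<integral>\<^sup>+\<omega>. indicator (E k) \<omega> \<partial>M)
        = ennreal (p * f) * ennreal (prob {\<omega> \<in> space M. k < Z n \<omega>})"
      using p_nonneg f by (simp add: ennreal_mult[symmetric] mult_ac)
  qed
  also have "\<dots> = ennreal (p * f) * (\<integral>\<^sup>+\<omega>. ennreal (real (Z n \<omega>)) \<partial>M)"
    by (simp add: ennreal_suminf_cmult nn_integral_Z_eq_suminf)
  also have "(\<integral>\<^sup>+\<omega>. ennreal (real (Z n \<omega>)) \<partial>M) = ennreal muZ"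
    using nn_integral_eq_integral[OF integrable_Z[of n]] expectation_Z_eq[of n] by (simp add: muZ_def)
  finally have "(\<integral>\<^sup>+\<omega>. ennreal (of_bool (B n \<omega>) * low_count n f \<omega>) \<partial>M) = ennreal (p * f) * ennreal muZ" .
  moreover have "(\<integral>\<^sup>+\<omega>. ennreal (of_bool (B n \<omega>) * low_count n f \<omega>) \<partial>M)
      = ennreal (expectation (\<lambda>\<omega>. of_bool (B n \<omega>) * low_count n f \<omega>))"
    by (rule nn_integral_eq_integral[OF int]) (auto simp: low_count_bounds)
  moreover have "0 \<le> expectation (\<lambda>\<omega>. of_bool (B n \<omega>) * low_count n f \<omega>)"
    by (rule integral_nonneg_AE) (auto simp: low_count_bounds)
  ultimately show "expectation (\<lambda>\<omega>. of_bool (B n \<omega>) * low_count n f \<omega>) = p * f * muZ"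
    using p_nonneg f muZ_nonneg by (simp add: ennreal_mult[symmetric])
qed

lemma expectation_of_bool:
  assumes [measurable]: "Measurable.pred M P"
  shows "expectation (\<lambda>\<omega>. of_bool (P \<omega>) :: real) = prob {\<omega> \<in> space M. P \<omega>}"
proof -
  have "expectation (\<lambda>\<omega>. of_bool (P \<omega>) :: real) = expectation (indicator {\<omega> \<in> space M. P \<omega>})"
    by (rule Bochner_Integration.integral_cong[OF refl]) (auto simp: indicator_def)
  also have "\<dots> = prob {\<omega> \<in> space M. P \<omega>}" by (simp add: emeasure_eq_measure)
  finally show ?thesis .
qed

lemma expectation_removal_size: "expectation (\<lambda>\<omega>. (1 - of_bool (B n \<omega>)) * real (X n \<omega>)) = (1 - p) * muX"
proof -
  define g where "g i = (case i of SB _ \<Rightarrow> (\<lambda>r::real. 1 - r) | _ \<Rightarrow> (\<lambda>r. r))" for i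
  have ind: "indep_vars (\<lambda>_. borel) (\<lambda>i \<omega>. g i (model_vars X Z B U i \<omega>)) UNIV"
    by (rule indep_vars_compose2[OF indep]) (auto simp: g_def split: src.split)
  have ind2: "indep_vars (\<lambda>_. borel) (\<lambda>i \<omega>. g i (model_vars X Z B U i \<omega>)) {SB n, SX n}"
    by (rule indep_vars_subset[OF ind]) auto
  have "expectation (\<lambda>\<omega>. \<Prod>i\<in>{SB n, SX n}. g i (model_vars X Z B U i \<omega>))
      = (\<Prod>i\<in>{SB n, SX n}. expectation (\<lambda>\<omega>. g i (model_vars X Z B U i \<omega>)))"
  proof (rule indep_vars_lebesgue_integral[OF _ ind2])
    have "integrable M (\<lambda>\<omega>. 1 - of_bool (B n \<omega>) :: real)"
      by (rule integrable_const_bound[where B = 1]) auto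
    then show "\<And>i. i \<in> {SB n, SX n} \<Longrightarrow> integrable M (\<lambda>\<omega>. g i (model_vars X Z B U i \<omega>))"
      by (auto simp: g_def integrable_X)
  qed simp
  moreover have "expectation (\<lambda>\<omega>. 1 - of_bool (B n \<omega>) :: real) = 1 - p"
  proof -
    have "expectation (\<lambda>\<omega>. 1 - of_bool (B n \<omega>) :: real)
        = expectation (\<lambda>\<omega>. 1) - expectation (\<lambda>\<omega>. of_bool (B n \<omega>) :: real)"
      by (rule Bochner_Integration.integral_diff) (auto intro: integrable_const_bound[where B=1])
    then show ?thesis using expectation_of_bool[of "B n"] by (simp add: B_law prob_space)
  qed
  ultimately show ?thesis using expectation_X_eq[of n] by (simp add: g_def muX_def)
qed

lemma indep_var_of_disjoint_blocks:
  fixes V :: "nat \<Rightarrow> 'a \<Rightarrow> real" and \<Phi> :: "nat \<Rightarrow> (src \<Rightarrow> real) \<Rightarrow> real" and blk :: "nat \<Rightarrow> src set"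
  assumes \<Phi>m: "\<And>n. \<Phi> n \<in> PiM (blk n) (\<lambda>_. borel) \<rightarrow>\<^sub>M borel"
  and Veq: "\<And>n \<omega>. V n \<omega> = \<Phi> n (restrict (\<lambda>i. model_vars X Z B U i \<omega>) (blk n))"
  and disj: "blk n \<inter> blk m = {}"
  shows "indep_var borel (V n) borel (V m)"
proof -
  have "indep_var (PiM (blk n) (\<lambda>_. borel)) (\<lambda>\<omega>. restrict (\<lambda>i. model_vars X Z B U i \<omega>) (blk n))
                  (PiM (blk m) (\<lambda>_. borel)) (\<lambda>\<omega>. restrict (\<lambda>i. model_vars X Z B U i \<omega>) (blk m))"
    by (rule indep_var_restrict[OF indep disj]) auto
  then have "indep_var borel (\<Phi> n \<circ> (\<lambda>\<omega>. restrict (\<lambda>i. model_vars X Z B U i \<omega>) (blk n)))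
                       borel (\<Phi> m \<circ> (\<lambda>\<omega>. restrict (\<lambda>i. model_vars X Z B U i \<omega>) (blk m)))"
    by (rule indep_var_compose[OF _ \<Phi>m \<Phi>m])
  moreover have "\<And>n. \<Phi> n \<circ> (\<lambda>\<omega>. restrict (\<lambda>i. model_vars X Z B U i \<omega>) (blk n)) = V n"
    by (auto simp: Veq fun_eq_iff)
  ultimately show ?thesis by simp
qed

definition surplus_step :: "real \<Rightarrow> nat \<Rightarrow> 'a \<Rightarrow> real" where
  "surplus_step f n \<omega> = of_bool (B n \<omega>) * low_count n f \<omega> - (1 - of_bool (B n \<omega>)) * real (X n \<omega>)"

lemma surplus_step_measurable [measurable]: "surplus_step f n \<in> borel_measurable M"
  unfolding surplus_step_def by measurable

definition surplus_step_block :: "nat \<Rightarrow> src set" where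
  "surplus_step_block n = {SX n, SZ n, SB n} \<union> range (SU n)"

text \<open>The increment of step n as a function of that step's driving variables (all coerced to real):
  Z n is recovered as the floor of its coercion and B n as the test for 1.\<close>

definition surplus_step_fun :: "real \<Rightarrow> nat \<Rightarrow> (src \<Rightarrow> real) \<Rightarrow> real" where
  "surplus_step_fun f n g =
     of_bool (g (SB n) = 1) * (\<Sum>k<nat \<lfloor>g (SZ n)\<rfloor>. of_bool (g (SU n k) < f))
     - (1 - of_bool (g (SB n) = 1)) * g (SX n)"

lemma surplus_step_fun_measurable:
  "surplus_step_fun f n \<in> PiM (surplus_step_block n) (\<lambda>_. borel) \<rightarrow>\<^sub>M borel"
proof -
  let ?P = "PiM (surplus_step_block n) (\<lambda>_. borel :: real measure)"
  have component [measurable]: "(\<lambda>g. g i) \<in> ?P \<rightarrow>\<^sub>M borel" if "i \<in> surplus_step_block n" for i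
    using measurable_component_singleton[OF that, of "\<lambda>_. borel"] by simp
  have [measurable]: "(\<lambda>g. g (SB n)) \<in> ?P \<rightarrow>\<^sub>M borel" "(\<lambda>g. g (SX n)) \<in> ?P \<rightarrow>\<^sub>M borel"
    "(\<lambda>g. g (SU n k)) \<in> ?P \<rightarrow>\<^sub>M borel" for k
    by (simp_all add: component surplus_step_block_def)
  have floor: "(\<lambda>x::real. nat \<lfloor>x\<rfloor>) \<in> borel \<rightarrow>\<^sub>M count_space UNIV"
    by (rule measurable_compose[OF measurable_real_floor]) simp
  have Z_floor: "(\<lambda>g. nat \<lfloor>g (SZ n)\<rfloor>) \<in> ?P \<rightarrow>\<^sub>M count_space UNIV"
    using measurable_compose[OF component[of "SZ n"] floor] by (simp add: surplus_step_block_def)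
  have sum: "(\<lambda>g. \<Sum>k<j. of_bool (g (SU n k) < f) :: real) \<in> borel_measurable ?P" for j
    by measurable
  have [measurable]:
    "(\<lambda>g. \<Sum>k<nat \<lfloor>g (SZ n)\<rfloor>. of_bool (g (SU n k) < f) :: real) \<in> borel_measurable ?P"
    using measurable_compose_countable'[OF sum Z_floor] by simp
  show ?thesis unfolding surplus_step_fun_def by measurable
qed

lemma surplus_step_eq_fun:
  "surplus_step f n \<omega> = surplus_step_fun f n (restrict (\<lambda>i. model_vars X Z B U i \<omega>) (surplus_step_block n))"
  by (simp add: surplus_step_def surplus_step_fun_def surplus_step_block_def low_count_eq_sum)

lemma indep_surplus_steps: "n \<noteq> m \<Longrightarrow> indep_var borel (surplus_step f n) borel (surplus_step f m)"
  by (rule indep_var_of_disjoint_blocks[OF surplus_step_fun_measurable surplus_step_eq_fun])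
     (auto simp: surplus_step_block_def)

lemma muX_ge1: "1 \<le> muX"
proof -
  have "expectation (\<lambda>\<omega>. 1::real) \<le> muX" unfolding muX_def
    by (rule integral_mono_AE) (use integrable_X pos in \<open>auto elim!: eventually_mono simp: Suc_le_eq\<close>)
  then show ?thesis by (simp add: prob_space)
qed

lemma muZ_ge1: "1 \<le> muZ"
proof -
  have "expectation (\<lambda>\<omega>. 1::real) \<le> muZ" unfolding muZ_def
    by (rule integral_mono_AE) (use integrable_Z pos in \<open>auto elim!: eventually_mono simp: Suc_le_eq\<close>)
  then show ?thesis by (simp add: prob_space)
qed

end

locale supercritical_model = evolution_model +
  fixes f :: real
  assumes p_lt1: "p < 1"
    and p_gt: "muX / (muX + muZ) < p"
    and f_def: "f = ((1 - p) / p) * (muX / muZ)"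
begin

lemma p_pos: "0 < p"
  using p_gt muX_ge1 muZ_ge1 by (smt (verit) divide_pos_pos)

lemma f_pos: "0 < f" unfolding f_def using p_pos p_lt1 muX_ge1 muZ_ge1 by simp

lemma f_lt1: "f < 1"
proof -
  have "muX < p * (muX + muZ)" using p_gt muX_ge1 muZ_ge1 by (simp add: divide_less_eq)
  then have "(1 - p) * muX < p * muZ" by (simp add: algebra_simps)
  then show ?thesis unfolding f_def using p_pos muZ_ge1 by (simp add: field_simps)
qed

text \<open>This is where the value of f enters: it balances the expected number of low births per
  step against the expected removal size.\<close>

lemma expectation_surplus_step: "expectation (surplus_step f n) = 0"
proof -
  have "expectation (surplus_step f n) = expectation (\<lambda>\<omega>. of_bool (B n \<omega>) * low_count n f \<omega>)
      - expectation (\<lambda>\<omega>. (1 - of_bool (B n \<omega>)) * real (X n \<omega>))"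
    unfolding surplus_step_def
  proof (rule Bochner_Integration.integral_diff)
    show "integrable M (\<lambda>\<omega>. of_bool (B n \<omega>) * low_count n f \<omega>)"
      using integrable_birth_low_count f_pos f_lt1 by simp
    show "integrable M (\<lambda>\<omega>. (1 - of_bool (B n \<omega>)) * real (X n \<omega>))"
      by (rule Bochner_Integration.integrable_bound[OF integrable_X[of n]]) (auto intro!: AE_I2)
  qed
  also have "\<dots> = p * f * muZ - (1 - p) * muX"
    using expectation_birth_low_count[of f n] f_pos f_lt1 expectation_removal_size[of n] by simp
  also have "\<dots> = 0" unfolding f_def using p_pos muZ_ge1 by (simp add: field_simps)
  finally show ?thesis .
qed

definition surplus_step_var where "surplus_step_var = expectation (\<lambda>\<omega>. (real (Z 0 \<omega>))\<^sup>2) + (real Mx)\<^sup>2"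

lemma surplus_step_square_le: "AE \<omega> in M. (surplus_step f n \<omega>)\<^sup>2 \<le> (real (Z n \<omega>))\<^sup>2 + (real Mx)\<^sup>2"
  using X_bdd
proof eventually_elim
  case (elim \<omega>)
  show ?case
  proof (cases "B n \<omega>")
    case True
    then have "(surplus_step f n \<omega>)\<^sup>2 = (low_count n f \<omega>)\<^sup>2" by (simp add: surplus_step_def)
    also have "\<dots> \<le> (real (Z n \<omega>))\<^sup>2" using low_count_bounds[of n f \<omega>] by (intro power_mono) auto
    finally show ?thesis using zero_le_power2[of "real Mx"] by linarith
  next
    case False
    then have "(surplus_step f n \<omega>)\<^sup>2 = (real (X n \<omega>))\<^sup>2" by (simp add: surplus_step_def)
    also have "\<dots> \<le> (real Mx)\<^sup>2" using elim by (intro power_mono) auto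
    finally show ?thesis using zero_le_power2[of "real (Z n \<omega>)"] by linarith
  qed
qed

lemma uncorrelated_surplus_steps: "uncorrelated_seq M (surplus_step f) surplus_step_var"
proof (rule uncorrelated_seqI)
  have ib: "integrable M (\<lambda>\<omega>. (real (Z n \<omega>))\<^sup>2 + (real Mx)\<^sup>2)" for n
    by (rule Bochner_Integration.integrable_add[OF integrable_Z_square]) simp
  show int2: "integrable M (\<lambda>\<omega>. (surplus_step f n \<omega>)\<^sup>2)" for n
    by (rule Bochner_Integration.integrable_bound[OF ib[of n]])
       (use surplus_step_square_le[of n] in \<open>auto elim!: eventually_mono\<close>)
  show "expectation (\<lambda>\<omega>. (surplus_step f n \<omega>)\<^sup>2) \<le> surplus_step_var" for n
  proof -
    have "expectation (\<lambda>\<omega>. (surplus_step f n \<omega>)\<^sup>2) \<le> expectation (\<lambda>\<omega>. (real (Z n \<omega>))\<^sup>2 + (real Mx)\<^sup>2)"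
      by (rule integral_mono_AE[OF int2 ib surplus_step_square_le])
    also have "\<dots> = surplus_step_var"
      using expectation_Z_square_eq[of n] by (simp add: surplus_step_var_def integrable_Z_square prob_space)
    finally show ?thesis .
  qed
qed (auto simp: expectation_surplus_step indep_surplus_steps)

definition birth_size_dev :: "nat \<Rightarrow> 'a \<Rightarrow> real" where "birth_size_dev n \<omega> = real (Z n \<omega>) - muZ"

lemma birth_size_dev_measurable [measurable]: "birth_size_dev n \<in> borel_measurable M"
  unfolding birth_size_dev_def by measurable

lemma uncorrelated_birth_size_devs:
  "uncorrelated_seq M birth_size_dev (2 * expectation (\<lambda>\<omega>. (real (Z 0 \<omega>))\<^sup>2) + 2 * muZ\<^sup>2)"
proof (rule uncorrelated_seqI)
  have ib: "integrable M (\<lambda>\<omega>. 2 * (real (Z n \<omega>))\<^sup>2 + 2 * muZ\<^sup>2)" for n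
    by (intro Bochner_Integration.integrable_add integrable_mult_right integrable_Z_square) simp
  have le: "(birth_size_dev n \<omega>)\<^sup>2 \<le> 2 * (real (Z n \<omega>))\<^sup>2 + 2 * muZ\<^sup>2" for n \<omega>
  proof -
    have "0 \<le> (real (Z n \<omega>) + muZ)\<^sup>2" by simp
    then show ?thesis unfolding birth_size_dev_def by (simp add: power2_eq_square algebra_simps)
  qed
  show int2: "integrable M (\<lambda>\<omega>. (birth_size_dev n \<omega>)\<^sup>2)" for n
    by (rule Bochner_Integration.integrable_bound[OF ib[of n]])
       (auto intro!: AE_I2 simp: le order_trans[OF le])
  show "expectation (\<lambda>\<omega>. (birth_size_dev n \<omega>)\<^sup>2)
      \<le> 2 * expectation (\<lambda>\<omega>. (real (Z 0 \<omega>))\<^sup>2) + 2 * muZ\<^sup>2" for n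
  proof -
    have "expectation (\<lambda>\<omega>. (birth_size_dev n \<omega>)\<^sup>2) \<le> expectation (\<lambda>\<omega>. 2 * (real (Z n \<omega>))\<^sup>2 + 2 * muZ\<^sup>2)"
      by (rule integral_mono[OF int2 ib le])
    also have "\<dots> = 2 * expectation (\<lambda>\<omega>. (real (Z 0 \<omega>))\<^sup>2) + 2 * muZ\<^sup>2"
      using expectation_Z_square_eq[of n] by (simp add: integrable_Z_square prob_space)
    finally show ?thesis .
  qed
  show "expectation (birth_size_dev n) = 0" for n
    unfolding birth_size_dev_def using expectation_Z_eq[of n]
    by (simp add: integrable_Z prob_space muZ_def)
  show "birth_size_dev n \<in> borel_measurable M" for n unfolding birth_size_dev_def by measurable
  show "indep_var borel (birth_size_dev n) borel (birth_size_dev m)" if "n \<noteq> m" for n m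
  proof (rule indep_var_of_disjoint_blocks[where blk="\<lambda>n. {SZ n}" and \<Phi>="\<lambda>n g. g (SZ n) - muZ"])
    show "(\<lambda>g. g (SZ n) - muZ) \<in> PiM {SZ n} (\<lambda>_. borel) \<rightarrow>\<^sub>M borel" for n
    proof -
      have [measurable]: "(\<lambda>g. g (SZ n)) \<in> PiM {SZ n} (\<lambda>_. borel) \<rightarrow>\<^sub>M (borel :: real measure)"
        by (rule measurable_component_singleton) simp
      show ?thesis by measurable
    qed
  qed (use that in \<open>auto simp: birth_size_dev_def\<close>)
qed

definition high_birth_dev :: "nat \<Rightarrow> 'a \<Rightarrow> real" where
  "high_birth_dev n \<omega> = of_bool (B n \<omega> \<and> f \<le> U n 0 \<omega> \<and> U n 0 \<omega> \<le> 1) - p * (1 - f)"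

lemma prob_high_first_birth: "prob {\<omega> \<in> space M. B n \<omega> \<and> f \<le> U n 0 \<omega> \<and> U n 0 \<omega> \<le> 1} = p * (1 - f)"
proof -
  define J where "J = {SB n, SU n 0}"
  define A where "A i = (case i of SB _ \<Rightarrow> {1} | SU _ _ \<Rightarrow> {f..1} | _ \<Rightarrow> UNIV)" for i
  have "prob (\<Inter>i\<in>J. model_vars X Z B U i -` A i \<inter> space M)
      = (\<Prod>i\<in>J. prob (model_vars X Z B U i -` A i \<inter> space M))"
    by (rule indep_varsD[OF indep]) (auto simp: J_def A_def split: src.split)
  moreover have "(\<Inter>i\<in>J. model_vars X Z B U i -` A i \<inter> space M)
      = {\<omega> \<in> space M. B n \<omega> \<and> f \<le> U n 0 \<omega> \<and> U n 0 \<omega> \<le> 1}"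
    by (auto simp: J_def A_def)
  moreover have "model_vars X Z B U (SB n) -` A (SB n) \<inter> space M = {\<omega> \<in> space M. B n \<omega>}"
    by (auto simp: A_def)
  moreover have "model_vars X Z B U (SU n 0) -` A (SU n 0) \<inter> space M = {\<omega> \<in> space M. U n 0 \<omega> \<in> {f..1}}"
    by (auto simp: A_def)
  moreover have "prob {\<omega> \<in> space M. U n 0 \<omega> \<in> {f..1}} = 1 - f"
  proof -
    have "prob {\<omega> \<in> space M. U n 0 \<omega> \<in> {f..1}} = measure lborel ({f..1} \<inter> {0..1})"
      by (rule prob_fitness_in) simp
    also have "{f..1} \<inter> {0..1} = {f..1}" using f_pos by auto
    finally show ?thesis using f_lt1 by simp
  qed
  ultimately show ?thesis by (simp add: J_def B_law)
qed

lemma uncorrelated_high_birth_devs: "uncorrelated_seq M high_birth_dev 1"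
proof (rule uncorrelated_seqI)
  have c: "0 \<le> p * (1 - f)" "p * (1 - f) \<le> 1"
    using p_pos p_lt1 f_pos f_lt1 by (auto simp: mult_le_one)
  have le: "(high_birth_dev n \<omega>)\<^sup>2 \<le> 1" for n \<omega>
  proof -
    have "\<bar>high_birth_dev n \<omega>\<bar> \<le> 1" unfolding high_birth_dev_def using c by auto
    then show ?thesis by (simp add: abs_le_square_iff[symmetric] power_le_one_iff abs_square_le_1)
  qed
  show meas: "high_birth_dev n \<in> borel_measurable M" for n unfolding high_birth_dev_def by measurable
  show int2: "integrable M (\<lambda>\<omega>. (high_birth_dev n \<omega>)\<^sup>2)" for n
    by (rule integrable_const_bound[where B=1]) (use meas in \<open>auto simp: le\<close>)
  show "expectation (\<lambda>\<omega>. (high_birth_dev n \<omega>)\<^sup>2) \<le> 1" for n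
    using integral_mono[OF int2 integrable_const le, of n] by (simp add: prob_space)
  show "expectation (high_birth_dev n) = 0" for n
  proof -
    have "expectation (high_birth_dev n)
        = expectation (\<lambda>\<omega>. of_bool (B n \<omega> \<and> f \<le> U n 0 \<omega> \<and> U n 0 \<omega> \<le> 1)) - expectation (\<lambda>\<omega>. p * (1 - f))"
      unfolding high_birth_dev_def
      by (rule Bochner_Integration.integral_diff) (auto intro!: integrable_const_bound[where B = 1])
    also have "\<dots> = 0" by (subst expectation_of_bool) (auto simp: prob_high_first_birth prob_space)
    finally show ?thesis .
  qed
  show "indep_var borel (high_birth_dev n) borel (high_birth_dev m)" if "n \<noteq> m" for n m
  proof (rule indep_var_of_disjoint_blocks[where blk = "\<lambda>n. {SB n, SU n 0}"
      and \<Phi> = "\<lambda>n g. of_bool (g (SB n) = 1 \<and> f \<le> g (SU n 0) \<and> g (SU n 0) \<le> 1) - p * (1 - f)"])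
    show "(\<lambda>g. of_bool (g (SB n) = 1 \<and> f \<le> g (SU n 0) \<and> g (SU n 0) \<le> 1) - p * (1 - f))
        \<in> PiM {SB n, SU n 0} (\<lambda>_. borel) \<rightarrow>\<^sub>M borel" for n
    proof -
      have [measurable]: "(\<lambda>g. g (SB n)) \<in> PiM {SB n, SU n 0} (\<lambda>_. borel) \<rightarrow>\<^sub>M (borel :: real measure)"
          "(\<lambda>g. g (SU n 0)) \<in> PiM {SB n, SU n 0} (\<lambda>_. borel) \<rightarrow>\<^sub>M (borel :: real measure)"
        by (rule measurable_component_singleton; simp)+
      show ?thesis by measurable
    qed
  qed (use that in \<open>auto simp: high_birth_dev_def\<close>)
qed

lemma distr_relabel_fitness: "distr M lborel (\<lambda>\<omega>. relabel f (U n k \<omega>)) = uniform_measure lborel {f..1}"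
proof (rule cdf_unique)
  have f: "0 < f" "f < 1" using f_pos f_lt1 by auto
  show "real_distribution (distr M lborel (\<lambda>\<omega>. relabel f (U n k \<omega>)))"
    unfolding real_distribution_def real_distribution_axioms_def
    by (auto intro!: prob_space_distr)
  show "real_distribution (uniform_measure lborel {f..1})"
    unfolding real_distribution_def real_distribution_axioms_def using f
    by (auto intro!: prob_space_uniform_measure)
  show "cdf (distr M lborel (\<lambda>\<omega>. relabel f (U n k \<omega>))) = cdf (uniform_measure lborel {f..1})"
  proof
    fix x
    have "cdf (distr M lborel (\<lambda>\<omega>. relabel f (U n k \<omega>))) x
        = prob ((\<lambda>\<omega>. relabel f (U n k \<omega>)) -` {..x} \<inter> space M)"
      unfolding cdf_def by (rule measure_distr) auto
    also have "\<dots> = prob {\<omega> \<in> space M. U n k \<omega> \<in> {t. relabel f t \<le> x}}"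
      by (auto intro!: arg_cong[where f = prob])
    also have "\<dots> = measure lborel ({t. relabel f t \<le> x} \<inter> {0..1})" by (rule prob_fitness_in) measurable
    also have "\<dots> = measure lborel ({f..1} \<inter> {..x}) / (1 - f)" by (rule measure_relabel_sublevel[OF f])
    also have "\<dots> = cdf (uniform_measure lborel {f..1}) x"
      unfolding cdf_def using f by (subst measure_uniform_measure) auto
    finally show "cdf (distr M lborel (\<lambda>\<omega>. relabel f (U n k \<omega>))) x
        = cdf (uniform_measure lborel {f..1}) x" .
  qed
qed

definition sample :: "nat \<Rightarrow> 'a \<Rightarrow> real" where
  "sample i \<omega> = relabel f (U (fst (prod_decode i)) (snd (prod_decode i)) \<omega>)"

lemma distr_sample: "distr M lborel (sample i) = uniform_measure lborel {f..1}"
  unfolding sample_def by (rule distr_relabel_fitness)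

lemma indep_sample: "indep_vars (\<lambda>_. borel) sample UNIV"
proof -
  define h where "h i = SU (fst (prod_decode i)) (snd (prod_decode i))" for i
  have inj: "inj_on h UNIV"
  proof (rule inj_onI)
    fix i j assume "h i = h j"
    then have "prod_decode i = prod_decode j" by (simp add: h_def prod_eq_iff)
    then show "i = j" by (metis prod_decode_inverse)
  qed
  have "indep_vars (\<lambda>_. borel) (model_vars X Z B U) (h ` UNIV)"
    by (rule indep_vars_subset[OF indep]) auto
  then have "indep_vars (\<lambda>_. borel) (\<lambda>i. model_vars X Z B U (h i)) UNIV"
    by (rule indep_vars_reindex[OF _ inj])
  then have "indep_vars (\<lambda>_. borel) (\<lambda>i \<omega>. relabel f (model_vars X Z B U (h i) \<omega>)) UNIV"
    by (rule indep_vars_compose2) simp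
  then show ?thesis by (simp add: h_def sample_def[abs_def])
qed

lemma AE_fitness_in_unit: "AE \<omega> in M. \<forall>m k. 0 \<le> U m k \<omega> \<and> U m k \<omega> \<le> 1"
proof -
  have "AE \<omega> in M. 0 \<le> U m k \<omega> \<and> U m k \<omega> \<le> 1" for m k
  proof (rule AE_I'[where N="{\<omega> \<in> space M. U m k \<omega> \<in> - {0..1}}"])
    have "prob {\<omega> \<in> space M. U m k \<omega> \<in> - {0..1}} = measure lborel (- {0..1} \<inter> {0..1})"
      using prob_fitness_in[of "- {0..1}" m k] by simp
    then have "prob {\<omega> \<in> space M. U m k \<omega> \<in> - {0..1}} = 0" by simp
    then show "{\<omega> \<in> space M. U m k \<omega> \<in> - {0..1}} \<in> null_sets M"
      by (auto simp: null_sets_def emeasure_eq_measure)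
  qed auto
  then show ?thesis by (simp add: AE_all_countable)
qed

lemma prob_first_fitness_tie:
  assumes ab: "a \<noteq> b"
  shows "prob {\<omega> \<in> space M. U a 0 \<omega> = U b 0 \<omega>} = 0"
proof -
  define V where "V n = U (if n = (0::nat) then a else b) 0" for n
  have iv: "indep_var borel (V 0) borel (V 1)"
  proof (rule indep_var_of_disjoint_blocks[where blk = "\<lambda>n. {SU (if n = 0 then a else b) 0}"
      and \<Phi> = "\<lambda>n g. g (SU (if n = 0 then a else b) 0)"])
    show "(\<lambda>g. g (SU (if n = 0 then a else b) 0))
        \<in> PiM {SU (if n = 0 then a else b) 0} (\<lambda>_. borel) \<rightarrow>\<^sub>M borel" for n
      by (rule measurable_component_singleton) simp
  qed (use ab in \<open>auto simp: V_def\<close>)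
  have VU: "V 0 = U a 0" "V 1 = U b 0" by (auto simp: V_def)
  define P1 where "P1 = distr M borel (U a 0)"
  define P2 where "P2 = distr M borel (U b 0)"
  have eqd: "P1 \<Otimes>\<^sub>M P2 = distr M (borel \<Otimes>\<^sub>M borel) (\<lambda>\<omega>. (U a 0 \<omega>, U b 0 \<omega>))"
    using iv unfolding VU indep_var_distribution_eq P1_def P2_def by auto
  interpret P2: prob_space P2 unfolding P2_def by (rule prob_space_distr) simp
  define Diag where "Diag = {p \<in> space (borel \<Otimes>\<^sub>M (borel::real measure)). fst p = snd p}"
  have Dsets: "Diag \<in> sets (borel \<Otimes>\<^sub>M borel)" unfolding Diag_def by measurable
  have "emeasure (P1 \<Otimes>\<^sub>M P2) Diag = (\<integral>\<^sup>+x. emeasure P2 (Pair x -` Diag) \<partial>P1)"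
    by (rule P2.emeasure_pair_measure_alt) (simp add: Dsets P1_def P2_def)
  also have "\<dots> = (\<integral>\<^sup>+x. 0 \<partial>P1)"
  proof (rule nn_integral_cong)
    fix x
    have "Pair x -` Diag = {x}" by (auto simp: Diag_def space_pair_measure)
    moreover have "emeasure P2 {x} = 0"
    proof -
      have "emeasure P2 {x} = emeasure M (U b 0 -` {x} \<inter> space M)"
        unfolding P2_def by (rule emeasure_distr) auto
      also have "U b 0 -` {x} \<inter> space M = {\<omega> \<in> space M. U b 0 \<omega> \<in> {x}}" by auto
      also have "emeasure M \<dots> = ennreal (measure lborel ({x} \<inter> {0..1}))"
        using prob_fitness_in[of "{x}" b 0] by (simp add: emeasure_eq_measure)
      also have "\<dots> = 0" by (cases "x \<in> {0..1}") auto
      finally show ?thesis .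
    qed
    ultimately show "emeasure P2 (Pair x -` Diag) = 0" by simp
  qed
  finally have "emeasure (distr M (borel \<Otimes>\<^sub>M borel) (\<lambda>\<omega>. (U a 0 \<omega>, U b 0 \<omega>))) Diag = 0"
    using eqd by simp
  moreover have "emeasure (distr M (borel \<Otimes>\<^sub>M borel) (\<lambda>\<omega>. (U a 0 \<omega>, U b 0 \<omega>))) Diag
      = emeasure M {\<omega> \<in> space M. U a 0 \<omega> = U b 0 \<omega>}"
    by (subst emeasure_distr[OF _ Dsets])
       (auto simp: Diag_def space_pair_measure intro!: arg_cong[where f = "emeasure M"])
  ultimately show ?thesis by (simp add: emeasure_eq_measure)
qed

lemma AE_inj_first_fitness: "AE \<omega> in M. inj (\<lambda>m. U m 0 \<omega>)"
proof -
  have "AE \<omega> in M. a \<noteq> b \<longrightarrow> U a 0 \<omega> \<noteq> U b 0 \<omega>" for a b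
  proof (cases "a = b")
    case False
    show ?thesis
    proof (rule AE_I'[where N="{\<omega> \<in> space M. U a 0 \<omega> = U b 0 \<omega>}"])
      show "{\<omega> \<in> space M. U a 0 \<omega> = U b 0 \<omega>} \<in> null_sets M"
        using prob_first_fitness_tie[OF False] by (auto simp: null_sets_def emeasure_eq_measure)
    qed auto
  qed simp
  then have "AE \<omega> in M. \<forall>a b. a \<noteq> b \<longrightarrow> U a 0 \<omega> \<noteq> U b 0 \<omega>" by (simp add: AE_all_countable)
  then show ?thesis by (auto simp: inj_def elim!: eventually_mono)
qed

lemma low_surplus_eq_sum_surplus_step:
  "tree_run.low_surplus (\<lambda>m. B m \<omega>) (\<lambda>m. X m \<omega>) (\<lambda>m. Z m \<omega>) (\<lambda>m k. U m k \<omega>) f n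
     = (\<Sum>i<n. surplus_step f i \<omega>)"
  by (simp add: tree_run.low_surplus_eq_sum surplus_step_def low_count_def)

lemma AE_low_surplus_bound:
  assumes "\<delta> > 0"
  shows "AE \<omega> in M. \<exists>C. \<forall>n.
    \<bar>tree_run.low_surplus (\<lambda>m. B m \<omega>) (\<lambda>m. X m \<omega>) (\<lambda>m. Z m \<omega>) (\<lambda>m k. U m k \<omega>) f n\<bar>
      \<le> C + (2 * real n) powr (1/2 + \<delta>)"
proof -
  interpret uncorrelated_seq M "surplus_step f" surplus_step_var
    by (rule uncorrelated_surplus_steps)
  show ?thesis
    using AE_partial_sum_bound[OF assms] by (simp add: low_surplus_eq_sum_surplus_step)
qed

lemma AE_birth_size_bound:
  assumes "\<delta> > 0"
  shows "AE \<omega> in M. \<exists>C. \<forall>n. real (Z n \<omega>) \<le> C + 2 * (2 * real (Suc n)) powr (1/2 + \<delta>)"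
proof -
  interpret uncorrelated_seq M birth_size_dev "2 * expectation (\<lambda>\<omega>. (real (Z 0 \<omega>))\<^sup>2) + 2 * muZ\<^sup>2"
    by (rule uncorrelated_birth_size_devs)
  show ?thesis
    using AE_partial_sum_bound[OF assms]
  proof eventually_elim
    case (elim \<omega>)
    then obtain C where C: "\<And>n. \<bar>\<Sum>i<n. birth_size_dev i \<omega>\<bar> \<le> C + (2 * real n) powr (1/2 + \<delta>)"
      by blast
    have "real (Z n \<omega>) \<le> (2 * C + muZ) + 2 * (2 * real (Suc n)) powr (1/2 + \<delta>)" for n
    proof -
      have "birth_size_dev n \<omega> = (\<Sum>i<Suc n. birth_size_dev i \<omega>) - (\<Sum>i<n. birth_size_dev i \<omega>)"
        by simp
      moreover have "(2 * real n) powr (1/2 + \<delta>) \<le> (2 * real (Suc n)) powr (1/2 + \<delta>)"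
        using assms by (intro powr_mono2) auto
      ultimately show ?thesis using C[of n] C[of "Suc n"] by (simp add: birth_size_dev_def)
    qed
    then show ?case by blast
  qed
qed

definition high_loss :: "nat \<Rightarrow> 'a \<Rightarrow> real" where
  "high_loss n \<omega> =
     real (card (tree_run.born_high (\<lambda>m. B m \<omega>) (\<lambda>m. Z m \<omega>) (\<lambda>m k. U m k \<omega>) f (Suc n)))
     - real (card (tree_run.alive_high (\<lambda>m. B m \<omega>) (\<lambda>m. X m \<omega>) (\<lambda>m. Z m \<omega>) (\<lambda>m k. U m k \<omega>) f n))"

lemma high_loss_bound:
  assumes "\<epsilon> > 0"
  shows "\<exists>C>0. AE \<omega> in M. \<exists>n0. \<forall>n\<ge>n0. 0 \<le> high_loss n \<omega> \<and> high_loss n \<omega> \<le> C * real n powr (1/2 + \<epsilon>)"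
proof (intro exI conjI)
  show "3 * 4 powr (1/2 + \<epsilon>) + 1 > (0::real)" by (simp add: add_pos_nonneg)
  show "AE \<omega> in M. \<exists>n0. \<forall>n\<ge>n0. 0 \<le> high_loss n \<omega>
          \<and> high_loss n \<omega> \<le> (3 * 4 powr (1/2 + \<epsilon>) + 1) * real n powr (1/2 + \<epsilon>)"
    using AE_low_surplus_bound[OF assms] AE_birth_size_bound[OF assms]
  proof eventually_elim
    case (elim \<omega>)
    then obtain C1 C2 where
      "\<And>n. \<bar>tree_run.low_surplus (\<lambda>m. B m \<omega>) (\<lambda>m. X m \<omega>) (\<lambda>m. Z m \<omega>) (\<lambda>m k. U m k \<omega>) f n\<bar>
         \<le> C1 + (2 * real n) powr (1/2 + \<epsilon>)"
      "\<And>n. real (Z n \<omega>) \<le> C2 + 2 * (2 * real (Suc n)) powr (1/2 + \<epsilon>)"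
      by blast
    from tree_run.eventually_card_born_high_minus_alive_high_le[OF _ this] assms
    show ?case
      using tree_run.card_alive_high_le by (force simp: high_loss_def)
  qed
qed

lemma AE_first_high_births_bound:
  "AE \<omega> in M. \<exists>C. \<forall>n. p * (1 - f) * real n - C - (2 * real n) powr (3/4)
     \<le> real (card {m \<in> {..<n}. B m \<omega> \<and> f \<le> U m 0 \<omega> \<and> U m 0 \<omega> \<le> 1})"
proof -
  interpret uncorrelated_seq M high_birth_dev 1 by (rule uncorrelated_high_birth_devs)
  have sum_eq: "(\<Sum>m<n. high_birth_dev m \<omega>)
      = real (card {m \<in> {..<n}. B m \<omega> \<and> f \<le> U m 0 \<omega> \<and> U m 0 \<omega> \<le> 1}) - real n * (p * (1 - f))"
    for n \<omega>
    unfolding high_birth_dev_def by (simp add: sum_subtractf Int_def)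
  have "AE \<omega> in M. \<exists>C. \<forall>n. \<bar>\<Sum>m<n. high_birth_dev m \<omega>\<bar> \<le> C + (2 * real n) powr (3/4)"
    using AE_partial_sum_bound[of "1/4"] by simp
  then show ?thesis
  proof eventually_elim
    case (elim \<omega>)
    then obtain C where C: "\<And>n. \<bar>\<Sum>m<n. high_birth_dev m \<omega>\<bar> \<le> C + (2 * real n) powr (3/4)"
      by blast
    have "p * (1 - f) * real n - C - (2 * real n) powr (3/4)
        \<le> real (card {m \<in> {..<n}. B m \<omega> \<and> f \<le> U m 0 \<omega> \<and> U m 0 \<omega> \<le> 1})" for n
      using C[of n] unfolding sum_eq by (auto simp: abs_le_iff algebra_simps)
    then show ?case by blast
  qed
qed

lemma image_sample_vimage:
  assumes "\<And>v. v \<in> H \<Longrightarrow> f \<le> U (fst v) (snd v) \<omega>"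
  shows "(\<lambda>i. sample i \<omega>) ` (prod_decode -` H) = (\<lambda>v. U (fst v) (snd v) \<omega>) ` H"
proof -
  have "(\<lambda>i. sample i \<omega>) ` (prod_decode -` H) = (\<lambda>v. U (fst v) (snd v) \<omega>) ` prod_decode ` (prod_decode -` H)"
    unfolding image_image using assms by (intro image_cong refl) (simp add: sample_def relabel_def)
  then show ?thesis by (simp add: image_vimage_eq surj_prod_decode)
qed

lemma approaches_random_sample_fitnesses:
  "approaches_random_sample M
     (\<lambda>n \<omega>. (\<lambda>v. U (fst v) (snd v) \<omega>) ` tree (\<lambda>m. B m \<omega>) (\<lambda>m. X m \<omega>) (\<lambda>m. Z m \<omega>) (\<lambda>m k. U m k \<omega>) n)
     (uniform_measure lborel {f..1})"
  (is "approaches_random_sample M ?A _")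
  unfolding approaches_random_sample_def
proof (intro exI[of _ sample] conjI allI)
  show "indep_vars (\<lambda>_. borel) sample UNIV" by (rule indep_sample)
  show "distr M lborel (sample i) = uniform_measure lborel {f..1}" for i by (rule distr_sample)
  have c: "p * (1 - f) > 0" using p_pos f_lt1 by simp
  have quarter: "(0::real) < 1/4" by simp
  show "AE \<omega> in M. \<exists>I. (\<forall>n. finite (I n)) \<and> incseq I \<and>
          filterlim (\<lambda>n. card ((\<lambda>i. sample i \<omega>) ` I n)) at_top sequentially \<and>
          (\<forall>e>0. \<forall>\<^sub>F n in sequentially.
             real (card ((?A n \<omega> - (\<lambda>i. sample i \<omega>) ` I n) \<union> ((\<lambda>i. sample i \<omega>) ` I n - ?A n \<omega>)))
               \<le> e * real (card ((\<lambda>i. sample i \<omega>) ` I n)))"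
    using AE_low_surplus_bound[OF quarter] AE_first_high_births_bound AE_fitness_in_unit
      AE_inj_first_fitness pos
  proof eventually_elim
    case (elim \<omega>)
    let ?b = "\<lambda>m. B m \<omega>" and ?x = "\<lambda>m. X m \<omega>" and ?z = "\<lambda>m. Z m \<omega>" and ?u = "\<lambda>m k. U m k \<omega>"
    let ?H = "tree_run.born_high ?b ?z ?u f"
    let ?S = "\<lambda>n. (\<lambda>i. sample i \<omega>) ` (prod_decode -` ?H n)"
    have fit_eq: "tree_run.fit ?u = (\<lambda>v. U (fst v) (snd v) \<omega>)"
      by (simp add: tree_run.fit_def[abs_def])
    have S_eq: "?S n = (\<lambda>v. U (fst v) (snd v) \<omega>) ` ?H n" for n
      by (rule image_sample_vimage) (simp add: tree_run.born_high_def tree_run.fit_def)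
    obtain C1 C3 where
      "\<And>n. \<bar>tree_run.low_surplus ?b ?x ?z ?u f n\<bar> \<le> C1 + (2 * real n) powr (3/4)"
      "\<And>n. p * (1 - f) * real n - C3 - (2 * real n) powr (3/4)
              \<le> real (card {m \<in> {..<n}. ?b m \<and> f \<le> ?u m 0 \<and> ?u m 0 \<le> 1})"
      using elim by auto
    note approach = tree_run.born_high_fitnesses_approach[OF c _ _ _ this, unfolded fit_eq]
    show ?case
    proof (intro exI[of _ "\<lambda>n. prod_decode -` ?H n"] conjI allI impI)
      show "finite (prod_decode -` ?H n)" for n
        by (rule finite_vimageI) (simp_all add: inj_prod_decode tree_run.finite_born_high)
      show "incseq (\<lambda>n. prod_decode -` ?H n)"
        by (rule incseq_SucI) (auto simp: tree_run.born_high_def tree_run.born_def)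
      show "filterlim (\<lambda>n. card (?S n)) at_top sequentially"
        using approach(1) elim unfolding S_eq by simp
      show "\<forall>\<^sub>F n in sequentially.
          real (card ((?A n \<omega> - ?S n) \<union> (?S n - ?A n \<omega>))) \<le> e * real (card (?S n))" if "e > 0" for e
        using approach(2)[OF _ _ _ that] elim unfolding S_eq by simp
    qed
  qed
qed
end

theorem theorem1:
  fixes M :: "'a measure"
    and X Z :: "nat \<Rightarrow> 'a \<Rightarrow> nat"
    and B :: "nat \<Rightarrow> 'a \<Rightarrow> bool"
    and U :: "nat \<Rightarrow> nat \<Rightarrow> 'a \<Rightarrow> real"
    and p :: real and Mx :: nat and f :: real
    and T :: "nat \<Rightarrow> 'a \<Rightarrow> (nat \<times> nat) set"
    and R R' :: "nat \<Rightarrow> 'a \<Rightarrow> (nat \<times> nat) set"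
  assumes "prob_space M"
    and indep: "prob_space.indep_vars M (\<lambda>_. borel) (model_vars X Z B U) UNIV"
    and X_id: "\<And>n. distr M (count_space UNIV) (X n) = distr M (count_space UNIV) (X 0)"
    and Z_id: "\<And>n. distr M (count_space UNIV) (Z n) = distr M (count_space UNIV) (Z 0)"
    and B_law: "\<And>n. measure M {\<omega> \<in> space M. B n \<omega>} = p"
    and U_law: "\<And>n k. distr M lborel (U n k) = uniform_measure lborel {0..1}"
    and pos: "AE \<omega> in M. \<forall>n. 0 < X n \<omega> \<and> 0 < Z n \<omega>"
    and Mx_pos: "0 < Mx"
    and X_bdd: "AE \<omega> in M. \<forall>n. X n \<omega> \<le> Mx"
    and Z2: "integrable M (\<lambda>\<omega>. (real (Z 0 \<omega>))\<^sup>2)"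
    and p_lt1: "p < 1"
    and p_gt: "integral\<^sup>L M (\<lambda>\<omega>. real (X 0 \<omega>)) /
               (integral\<^sup>L M (\<lambda>\<omega>. real (X 0 \<omega>)) + integral\<^sup>L M (\<lambda>\<omega>. real (Z 0 \<omega>))) < p"
    and f_def: "f = ((1 - p) / p) * (integral\<^sup>L M (\<lambda>\<omega>. real (X 0 \<omega>)) / integral\<^sup>L M (\<lambda>\<omega>. real (Z 0 \<omega>)))"
    and T_def: "T = (\<lambda>n \<omega>. tree (\<lambda>m. B m \<omega>) (\<lambda>m. X m \<omega>) (\<lambda>m. Z m \<omega>) (\<lambda>m k. U m k \<omega>) n)"
    and R_def: "R = (\<lambda>n \<omega>. {v \<in> T n \<omega>. f \<le> U (fst v) (snd v) \<omega> \<and> U (fst v) (snd v) \<omega> \<le> 1})"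
    and R'_def: "R' = (\<lambda>n \<omega>. {(m, k). m \<le> n \<and> B m \<omega> \<and> k < Z m \<omega> \<and> f \<le> U m k \<omega> \<and> U m k \<omega> \<le> 1})"
  shows "(\<forall>\<epsilon>>0. \<exists>C>0. AE \<omega> in M. \<exists>n0. \<forall>n\<ge>n0.
            0 \<le> real (card (R' n \<omega>)) - real (card (R n \<omega>)) \<and>
            real (card (R' n \<omega>)) - real (card (R n \<omega>)) \<le> C * real n powr (1/2 + \<epsilon>))
         \<and> approaches_random_sample M (\<lambda>n \<omega>. (\<lambda>v. U (fst v) (snd v) \<omega>) ` T n \<omega>)
             (uniform_measure lborel {f..1})"
proof -
  interpret prob_space M by fact
  interpret evolution_model M X Z B U p Mx
    by unfold_locales (use assms in auto)
  interpret supercritical_model M X Z B U p Mx f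
    by unfold_locales (use assms in \<open>simp_all add: muX_def muZ_def\<close>)
  have R'_eq: "R' n \<omega> = tree_run.born_high (\<lambda>m. B m \<omega>) (\<lambda>m. Z m \<omega>) (\<lambda>m k. U m k \<omega>) f (Suc n)" for n \<omega>
    unfolding R'_def by (simp add: tree_run.born_high_Suc_eq)
  have R_eq: "R n \<omega> = tree_run.alive_high (\<lambda>m. B m \<omega>) (\<lambda>m. X m \<omega>) (\<lambda>m. Z m \<omega>) (\<lambda>m k. U m k \<omega>) f n"
    for n \<omega>
    unfolding R_def T_def by (simp add: tree_run.alive_high_eq)
  show ?thesis
    unfolding R_eq R'_eq T_def high_loss_def[symmetric]
    using high_loss_bound approaches_random_sample_fitnesses by blast
qed

end
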